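(* Let $L:G\to[0,\infty)$ be proper. (1) If $G$ has polynomial H-growth with respect to $L$, then there exists $s>0$ such that for every normalized 2-cocycle $\sigma$ and every $x\in C^*_r(G,\sigma)$ with $\sum_{g\in G}|\widehat x(g)|^2(1+L(g))^s<\infty$, the Fourier series of $x$ converges to $x$ in operator norm. (2) If $G$ has subexponential H-growth with respect to $L$, then for every normalized 2-cocycle $\sigma$ and every $x\in C^*_r(G,\sigma)$ such that $\sum_{g\in G}|\widehat x(g)|^2\exp(tL(g))<\infty$ for some $t>0$, the Fourier series of $x$ converges to $x$ in operator norm.
   Context: $G$ is a countable discrete group with identity $e$; $\sigma:G\times G\to\mathbb{T}$ is a normalized 2-cocycle ($\sigma(g,h)\sigma(gh,k)=\sigma(h,k)\sigma(g,hk)$, $\sigma(g,e)=\sigma(e,g)=1$); $\Lambda_\sigma(g)$ is the unitary on $\ell^2(G)$ with $(\Lambda_\sigma(g)\xi)(h)=\sigma(g,g^{-1}h)\xi(g^{-1}h)$; $\lambda=\Lambda_1$. $C^*_r(G,\sigma)$ is the operator-norm closed $*$-algebra generated by $\Lambda_\sigma(G)$ in $B(\ell^2(G))$. For $x\in C^*_r(G,\sigma)$, $\widehat x=x\delta_e\in\ell^2(G)$, and its Fourier series is $\sum_g\widehat x(g)\Lambda_\sigma(g)$ (convergence meaning convergence of the net of finite partial sums). $L$ proper means $L^{-1}([0,t])$ finite for all $t$. $\mathcal{K}(G)$ = finitely supported functions; $\pi_\lambda(f)=\sum_g f(g)\lambda(g)$. The Haagerup content of a finite nonempty $E\subseteq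 G$ is $c(E)=\sup\{\|\pi_\lambda(f)\|\mid f\in\mathcal{K}(G),\ \mathrm{supp}f\subseteq E,\ \|f\|_2=1\}$. With $B_{r,L}=\{g\mid L(g)\le r\}$: polynomial H-growth w.r.t. $L$ means $c(B_{r,L})\le K(1+r)^p$ for some $K,p>0$ and all $r\ge0$; subexponential H-growth means for every $b>1$ there is $r_0$ with $c(B_{r,L})<b^r$ for $r\ge r_0$. *)

theory Defs
  imports "HOL-Analysis.Analysis" "HOL-Library.Countable"
begin

text \<open>The discrete group G is a type of class group_add (written additively:
identity 0, product g + h, inverse - g; commutativity is NOT assumed) and countable.\<close>

definition ell2 :: "('g \<Rightarrow> complex) set" where
  "ell2 = {\<xi>. (\<lambda>g. (cmod (\<xi> g))^2) summable_on UNIV}"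

definition l2norm :: "('g \<Rightarrow> complex) \<Rightarrow> real" where
  "l2norm \<xi> = sqrt (infsum (\<lambda>g. (cmod (\<xi> g))^2) UNIV)"

definition l2inner :: "('g \<Rightarrow> complex) \<Rightarrow> ('g \<Rightarrow> complex) \<Rightarrow> complex" where
  "l2inner \<xi> \<eta> = infsum (\<lambda>g. \<xi> g * cnj (\<eta> g)) UNIV"

type_synonym 'g op = "('g \<Rightarrow> complex) \<Rightarrow> ('g \<Rightarrow> complex)"

definition bounded_op :: "'g op \<Rightarrow> bool" where
  "bounded_op T \<longleftrightarrow> (\<forall>\<xi>\<in>ell2. T \<xi> \<in> ell2) \<and>
     (\<exists>M. \<forall>\<xi>\<in>ell2. l2norm (T \<xi>) \<le> M * l2norm \<xi>)"

text \<open>Operator norm on ell2 (meaningful for bounded operators).\<close>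
definition opnorm :: "'g op \<Rightarrow> real" where
  "opnorm T = Sup {l2norm (T \<xi>) / l2norm \<xi> | \<xi>. \<xi> \<in> ell2 \<and> \<xi> \<noteq> (\<lambda>_. 0)}"

definition normalized_2cocycle :: "('g::group_add \<Rightarrow> 'g \<Rightarrow> complex) \<Rightarrow> bool" where
  "normalized_2cocycle \<sigma> \<longleftrightarrow>
     (\<forall>g h. cmod (\<sigma> g h) = 1) \<and>
     (\<forall>g h k. \<sigma> g h * \<sigma> (g + h) k = \<sigma> h k * \<sigma> g (h + k)) \<and>
     (\<forall>g. \<sigma> g 0 = 1 \<and> \<sigma> 0 g = 1)"

definition Lam :: "('g::group_add \<Rightarrow> 'g \<Rightarrow> complex) \<Rightarrow> 'g \<Rightarrow> 'g op" where
  "Lam \<sigma> g = (\<lambda>\<xi> h. \<sigma> g (- g + h) * \<xi> (- g + h))"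

definition lreg :: "'g::group_add \<Rightarrow> 'g op" where
  "lreg = Lam (\<lambda>_ _. 1)"

text \<open>Reduced twisted group C*-algebra: operator-norm closed *-algebra generated by Lam sigma G.\<close>
inductive_set twisted_Cr :: "('g::group_add \<Rightarrow> 'g \<Rightarrow> complex) \<Rightarrow> 'g op set"
  for \<sigma> where
  gen: "Lam \<sigma> g \<in> twisted_Cr \<sigma>"
| add: "T \<in> twisted_Cr \<sigma> \<Longrightarrow> S \<in> twisted_Cr \<sigma> \<Longrightarrow> (\<lambda>\<xi> h. T \<xi> h + S \<xi> h) \<in> twisted_Cr \<sigma>"
| scale: "T \<in> twisted_Cr \<sigma> \<Longrightarrow> (\<lambda>\<xi> h. c * T \<xi> h) \<in> twisted_Cr \<sigma>"
| comp: "T \<in> twisted_Cr \<sigma> \<Longrightarrow> S \<in> twisted_Cr \<sigma> \<Longrightarrow> (\<lambda>\<xi>. T (S \<xi>)) \<in> twisted_Cr \<sigma>"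
| adj: "T \<in> twisted_Cr \<sigma> \<Longrightarrow> bounded_op S \<Longrightarrow>
        (\<forall>\<xi>\<in>ell2. \<forall>\<eta>\<in>ell2. l2inner (T \<xi>) \<eta> = l2inner \<xi> (S \<eta>)) \<Longrightarrow> S \<in> twisted_Cr \<sigma>"
| lim: "(\<And>n. Ts n \<in> twisted_Cr \<sigma>) \<Longrightarrow> bounded_op T \<Longrightarrow>
        (\<lambda>n. opnorm (\<lambda>\<xi> h. Ts n \<xi> h - T \<xi> h)) \<longlonglongrightarrow> 0 \<Longrightarrow> T \<in> twisted_Cr \<sigma>"

definition delta_e :: "'g::group_add \<Rightarrow> complex" where
  "delta_e = (\<lambda>h. if h = 0 then 1 else 0)"

definition fourier_coeff :: "'g::group_add op \<Rightarrow> 'g \<Rightarrow> complex" where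
  "fourier_coeff x = x delta_e"

definition fourier_partial :: "('g::group_add \<Rightarrow> 'g \<Rightarrow> complex) \<Rightarrow> 'g op \<Rightarrow> 'g set \<Rightarrow> 'g op" where
  "fourier_partial \<sigma> x F = (\<lambda>\<xi> h. \<Sum>g\<in>F. fourier_coeff x g * Lam \<sigma> g \<xi> h)"

definition fourier_series_converges :: "('g::group_add \<Rightarrow> 'g \<Rightarrow> complex) \<Rightarrow> 'g op \<Rightarrow> bool" where
  "fourier_series_converges \<sigma> x \<longleftrightarrow>
     ((\<lambda>F. opnorm (\<lambda>\<xi> h. fourier_partial \<sigma> x F \<xi> h - x \<xi> h)) \<longlongrightarrow> 0)
       (finite_subsets_at_top UNIV)"

definition proper_length :: "('g \<Rightarrow> real) \<Rightarrow> bool" where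
  "proper_length L \<longleftrightarrow> (\<forall>g. L g \<ge> 0) \<and> (\<forall>t. finite {g. L g \<le> t})"

definition pi_lambda :: "('g::group_add \<Rightarrow> complex) \<Rightarrow> 'g op" where
  "pi_lambda f = (\<lambda>\<xi> h. \<Sum>g\<in>{g. f g \<noteq> 0}. f g * lreg g \<xi> h)"

definition haagerup_content :: "'g::group_add set \<Rightarrow> real" where
  "haagerup_content E = (if E = {} then 0 else
     Sup {opnorm (pi_lambda f) | f. finite {g. f g \<noteq> 0} \<and> {g. f g \<noteq> 0} \<subseteq> E \<and> l2norm f = 1})"

definition ball_L :: "('g \<Rightarrow> real) \<Rightarrow> real \<Rightarrow> 'g set" where
  "ball_L L r = {g. L g \<le> r}"

definition poly_H_growth :: "('g::group_add \<Rightarrow> real) \<Rightarrow> bool" where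
  "poly_H_growth L \<longleftrightarrow> (\<exists>K p. K > 0 \<and> p > 0 \<and>
     (\<forall>r\<ge>0. haagerup_content (ball_L L r) \<le> K * (1 + r) powr p))"

definition subexp_H_growth :: "('g::group_add \<Rightarrow> real) \<Rightarrow> bool" where
  "subexp_H_growth L \<longleftrightarrow> (\<forall>b>1. \<exists>r0. \<forall>r\<ge>r0. haagerup_content (ball_L L r) < b powr r)"

end

(* Every element x of C*_r(G, sigma) is bounded, linear and commutes with the right twisted
   translations, so its values on the basis vectors delta_k are twisted translates of its value
   x delta_e, the Fourier coefficients. On finitely supported vectors the remainder x - S_F x of
   the Fourier series is therefore the limit of the blocks S_(F' - F) x, and it suffices to bound
   these blocks uniformly. Split F' - F into the annuli n < L <= n + 1: by Haagerup's inequality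
   the block over the n-th annulus has norm at most c(B_(n+1)) times the l2 norm of the
   coefficients there, which the weight psi bounds by sqrt (W / psi n). Hence
   ||x - S_F x|| <= sqrt W * sum_(n >= N) c(B_(n+1)) / sqrt (psi n) as soon as F contains B_N.
   Polynomial H-growth makes this series converge for psi r = (1 + r) powr (2 p + 4), and
   subexponential H-growth for psi r = exp (t r). *)

theory Submission
  imports Defs
begin

section \<open>The sequence space ell2\<close>

lemma l2norm_nonneg: "l2norm \<xi> \<ge> 0"
  unfolding l2norm_def by (intro real_sqrt_ge_zero infsum_nonneg) simp

lemma l2norm_square: "(l2norm \<xi>)^2 = infsum (\<lambda>g. (cmod (\<xi> g))^2) UNIV"
  unfolding l2norm_def by (simp add: infsum_nonneg)

lemma sum_square_le_l2norm_square:
  assumes "\<xi> \<in> ell2" "finite F"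
  shows "(\<Sum>g\<in>F. (cmod (\<xi> g))^2) \<le> (l2norm \<xi>)^2"
  unfolding l2norm_square using assms by (intro finite_sum_le_infsum) (auto simp: ell2_def)

lemma L2_set_le_l2norm:
  assumes "\<xi> \<in> ell2" "finite F"
  shows "L2_set (\<lambda>g. cmod (\<xi> g)) F \<le> l2norm \<xi>"
  using sum_square_le_l2norm_square[OF assms] l2norm_nonneg[of \<xi>]
  unfolding L2_set_def by (simp add: real_le_lsqrt)

lemma ell2_sum_square_boundedI:
  assumes "\<And>F. finite F \<Longrightarrow> (\<Sum>g\<in>F. (cmod (\<xi> g))^2) \<le> D^2" "D \<ge> 0"
  shows "\<xi> \<in> ell2" "l2norm \<xi> \<le> D"
proof -
  have summable: "(\<lambda>g. (cmod (\<xi> g))^2) summable_on UNIV"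
    using assms(1) by (intro nonneg_bdd_above_summable_on bdd_aboveI) auto
  then show "\<xi> \<in> ell2" by (simp add: ell2_def)
  have "(l2norm \<xi>)^2 \<le> D^2"
    unfolding l2norm_square using summable
    by (subst infsum_nonneg_is_SUPREMUM_real) (auto intro!: cSUP_least assms(1))
  then show "l2norm \<xi> \<le> D"
    using assms(2) l2norm_nonneg[of \<xi>] by (simp add: power_mono_iff)
qed

lemma ell2_L2_set_boundedI:
  assumes "\<And>F. finite F \<Longrightarrow> L2_set (\<lambda>g. cmod (\<xi> g)) F \<le> D"
  shows "\<xi> \<in> ell2" "l2norm \<xi> \<le> D"
proof -
  have "D \<ge> 0" using assms[of "{}"] by simp
  moreover have "(\<Sum>g\<in>F. (cmod (\<xi> g))^2) \<le> D^2" if "finite F" for F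
    using assms[OF that] \<open>D \<ge> 0\<close> unfolding L2_set_def by (simp add: real_sqrt_le_iff sqrt_le_D)
  ultimately show "\<xi> \<in> ell2" "l2norm \<xi> \<le> D" using ell2_sum_square_boundedI by blast+
qed

lemma norm_le_l2norm: "\<xi> \<in> ell2 \<Longrightarrow> cmod (\<xi> h) \<le> l2norm \<xi>"
  using L2_set_le_l2norm[of \<xi> "{h}"] by simp

lemma l2norm_eq_0: "\<xi> \<in> ell2 \<Longrightarrow> l2norm \<xi> = 0 \<Longrightarrow> \<xi> = (\<lambda>_. 0)"
  using norm_le_l2norm[of \<xi>] by fastforce

lemma l2norm_pos: "\<xi> \<in> ell2 \<Longrightarrow> \<xi> \<noteq> (\<lambda>_. 0) \<Longrightarrow> l2norm \<xi> > 0"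
  using l2norm_eq_0 l2norm_nonneg[of \<xi>] by force

lemma ell2_zero: "(\<lambda>_. 0) \<in> ell2" "l2norm (\<lambda>_. 0) = 0"
  by (auto simp: ell2_def l2norm_def)

lemma ell2_dominated:
  assumes "\<eta> \<in> ell2" "\<And>h. cmod (\<xi> h) \<le> C * cmod (\<eta> h)" "C \<ge> 0"
  shows "\<xi> \<in> ell2" "l2norm \<xi> \<le> C * l2norm \<eta>"
proof -
  have "L2_set (\<lambda>g. cmod (\<xi> g)) F \<le> C * l2norm \<eta>" if "finite F" for F
  proof -
    have "L2_set (\<lambda>g. cmod (\<xi> g)) F \<le> L2_set (\<lambda>g. C * cmod (\<eta> g)) F"
      by (rule L2_set_mono) (auto intro: assms)
    also have "\<dots> = C * L2_set (\<lambda>g. cmod (\<eta> g)) F"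
      using assms(3) by (simp add: L2_set_right_distrib)
    also have "\<dots> \<le> C * l2norm \<eta>"
      using L2_set_le_l2norm[OF assms(1) that] assms(3) by (simp add: mult_left_mono)
    finally show ?thesis .
  qed
  then show "\<xi> \<in> ell2" "l2norm \<xi> \<le> C * l2norm \<eta>" by (blast intro: ell2_L2_set_boundedI)+
qed

lemma ell2_add:
  assumes "\<xi> \<in> ell2" "\<eta> \<in> ell2"
  shows "(\<lambda>h. \<xi> h + \<eta> h) \<in> ell2" "l2norm (\<lambda>h. \<xi> h + \<eta> h) \<le> l2norm \<xi> + l2norm \<eta>"
proof -
  have "L2_set (\<lambda>g. cmod (\<xi> g + \<eta> g)) F \<le> l2norm \<xi> + l2norm \<eta>" if "finite F" for F
  proof -
    have "L2_set (\<lambda>g. cmod (\<xi> g + \<eta> g)) F \<le> L2_set (\<lambda>g. cmod (\<xi> g) + cmod (\<eta> g)) F"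
      by (rule L2_set_mono) (auto intro: norm_triangle_ineq)
    also have "\<dots> \<le> L2_set (\<lambda>g. cmod (\<xi> g)) F + L2_set (\<lambda>g. cmod (\<eta> g)) F"
      by (rule L2_set_triangle_ineq)
    also have "\<dots> \<le> l2norm \<xi> + l2norm \<eta>"
      using L2_set_le_l2norm[OF assms(1) that] L2_set_le_l2norm[OF assms(2) that] by simp
    finally show ?thesis .
  qed
  then show "(\<lambda>h. \<xi> h + \<eta> h) \<in> ell2" "l2norm (\<lambda>h. \<xi> h + \<eta> h) \<le> l2norm \<xi> + l2norm \<eta>"
    by (blast intro: ell2_L2_set_boundedI)+
qed

lemma ell2_scale:
  assumes "\<xi> \<in> ell2"
  shows "(\<lambda>h. c * \<xi> h) \<in> ell2" "l2norm (\<lambda>h. c * \<xi> h) = cmod c * l2norm \<xi>"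
proof -
  show "(\<lambda>h. c * \<xi> h) \<in> ell2"
    using ell2_dominated(1)[OF assms, of _ "cmod c"] by (simp add: norm_mult)
  have "l2norm (\<lambda>h. c * \<xi> h) = sqrt (infsum (\<lambda>g. (cmod c)^2 * (cmod (\<xi> g))^2) UNIV)"
    unfolding l2norm_def by (simp add: norm_mult power_mult_distrib)
  then show "l2norm (\<lambda>h. c * \<xi> h) = cmod c * l2norm \<xi>"
    unfolding l2norm_def by (simp add: infsum_cmult_right' real_sqrt_mult)
qed

lemma ell2_diff:
  assumes "\<xi> \<in> ell2" "\<eta> \<in> ell2"
  shows "(\<lambda>h. \<xi> h - \<eta> h) \<in> ell2" "l2norm (\<lambda>h. \<xi> h - \<eta> h) \<le> l2norm \<xi> + l2norm \<eta>"
  using ell2_add[OF assms(1) ell2_scale(1)[OF assms(2), of "-1"]]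
    ell2_scale(2)[OF assms(2), of "-1"]
  by simp_all

lemma ell2_sum:
  assumes "finite I" "\<And>i. i \<in> I \<Longrightarrow> v i \<in> ell2"
  shows "(\<lambda>h. \<Sum>i\<in>I. v i h) \<in> ell2 \<and> l2norm (\<lambda>h. \<Sum>i\<in>I. v i h) \<le> (\<Sum>i\<in>I. l2norm (v i))"
  using assms
proof (induction I rule: finite_induct)
  case empty
  then show ?case by (simp add: ell2_zero)
next
  case (insert a I)
  then show ?case using ell2_add[of "v a" "\<lambda>h. \<Sum>i\<in>I. v i h"] by fastforce
qed

lemma ell2_reindex:
  assumes "\<xi> \<in> ell2" "bij p" "\<And>h. cmod (c h) = 1"
  shows "(\<lambda>h. c h * \<xi> (p h)) \<in> ell2" "l2norm (\<lambda>h. c h * \<xi> (p h)) = l2norm \<xi>"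
proof -
  have p: "bij_betw p UNIV UNIV" using assms(2) by (simp add: bij_def bij_betw_def)
  have eq: "(\<lambda>g. (cmod (c g * \<xi> (p g)))^2) = (\<lambda>g. (cmod (\<xi> g))^2) \<circ> p"
    by (auto simp: norm_mult assms(3))
  have "(\<lambda>g. (cmod (c g * \<xi> (p g)))^2) summable_on UNIV"
    unfolding eq comp_def using assms(1) summable_on_reindex_bij_betw[OF p, of "\<lambda>g. (cmod (\<xi> g))^2"]
    by (simp add: ell2_def)
  then show "(\<lambda>h. c h * \<xi> (p h)) \<in> ell2" by (simp add: ell2_def)
  show "l2norm (\<lambda>h. c h * \<xi> (p h)) = l2norm \<xi>"
    unfolding l2norm_def eq comp_def
    using infsum_reindex_bij_betw[OF p, of "\<lambda>g. (cmod (\<xi> g))^2"] by simp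
qed

lemma ell2_finite_support:
  assumes "finite K" "\<And>h. h \<notin> K \<Longrightarrow> \<xi> h = 0"
  shows "\<xi> \<in> ell2" "l2norm \<xi> = L2_set (\<lambda>g. cmod (\<xi> g)) K"
proof -
  have "L2_set (\<lambda>g. cmod (\<xi> g)) F \<le> L2_set (\<lambda>g. cmod (\<xi> g)) K" if "finite F" for F
  proof -
    have "L2_set (\<lambda>g. cmod (\<xi> g)) F = L2_set (\<lambda>g. cmod (\<xi> g)) (F \<inter> K)"
      unfolding L2_set_def using that assms
      by (intro arg_cong[where f=sqrt] sum.mono_neutral_right) auto
    also have "\<dots> \<le> L2_set (\<lambda>g. cmod (\<xi> g)) K"
      unfolding L2_set_def using assms by (intro real_sqrt_le_mono sum_mono2) auto
    finally show ?thesis .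
  qed
  then have "\<xi> \<in> ell2" "l2norm \<xi> \<le> L2_set (\<lambda>g. cmod (\<xi> g)) K"
    by (blast intro: ell2_L2_set_boundedI)+
  then show "\<xi> \<in> ell2" "l2norm \<xi> = L2_set (\<lambda>g. cmod (\<xi> g)) K"
    using L2_set_le_l2norm[OF _ assms(1)] by (auto intro: antisym)
qed

lemma ell2_tail:
  assumes "\<xi> \<in> ell2" "finite K0" "\<delta> > 0"
  obtains K where "finite K" "K0 \<subseteq> K" "l2norm (\<lambda>h. if h \<in> K then 0 else \<xi> h) \<le> \<delta>"
proof -
  have "(\<lambda>g. (cmod (\<xi> g))^2) summable_on UNIV" using assms(1) by (simp add: ell2_def)
  then obtain Fa where Fa: "finite Fa"
    "dist (\<Sum>g\<in>Fa. (cmod (\<xi> g))^2) ((l2norm \<xi>)^2) \<le> \<delta>^2"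
    using infsum_finite_approximation[of _ UNIV "\<delta>^2"] assms(3) unfolding l2norm_square by auto
  define K where "K = K0 \<union> Fa"
  have K: "finite K" "K0 \<subseteq> K" using assms(2) Fa(1) by (auto simp: K_def)
  have "(\<Sum>g\<in>Fa. (cmod (\<xi> g))^2) \<le> (\<Sum>g\<in>K. (cmod (\<xi> g))^2)"
    using K(1) by (intro sum_mono2) (auto simp: K_def)
  with Fa(2) have K_close: "(l2norm \<xi>)^2 - (\<Sum>g\<in>K. (cmod (\<xi> g))^2) \<le> \<delta>^2"
    by (simp add: dist_real_def)
  have "(\<Sum>g\<in>G. (cmod (if g \<in> K then 0 else \<xi> g))^2) \<le> \<delta>^2" if G: "finite G" for G
  proof -
    have "(\<Sum>g\<in>G. (cmod (if g \<in> K then 0 else \<xi> g))^2) = (\<Sum>g\<in>G - K. (cmod (\<xi> g))^2)"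
      using G by (intro sum.mono_neutral_cong_right) auto
    also have "\<dots> = (\<Sum>g\<in>(G - K) \<union> K. (cmod (\<xi> g))^2) - (\<Sum>g\<in>K. (cmod (\<xi> g))^2)"
      using G K by (subst sum.union_disjoint) auto
    also have "\<dots> \<le> (l2norm \<xi>)^2 - (\<Sum>g\<in>K. (cmod (\<xi> g))^2)"
      using sum_square_le_l2norm_square[OF assms(1), of "(G - K) \<union> K"] G K by simp
    finally show ?thesis using K_close by simp
  qed
  then have "l2norm (\<lambda>h. if h \<in> K then 0 else \<xi> h) \<le> \<delta>"
    using assms(3) by (intro ell2_sum_square_boundedI(2)) auto
  with K show ?thesis by (rule that)
qed

definition delta_at :: "'g \<Rightarrow> 'g \<Rightarrow> complex" where
  "delta_at k = (\<lambda>h. if h = k then 1 else 0)"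

lemma delta_e_eq_delta_at: "delta_e = delta_at 0"
  by (simp add: delta_e_def delta_at_def)

lemma delta_at_ell2: "delta_at k \<in> ell2" "l2norm (delta_at k) = 1"
  using ell2_finite_support[of "{k}" "delta_at k"] by (auto simp: delta_at_def)

lemma delta_at_nonzero: "delta_at k \<noteq> (\<lambda>_. 0)"
  by (metis delta_at_def zero_neq_one)

lemma l2inner_summable:
  assumes "\<xi> \<in> ell2" "\<eta> \<in> ell2"
  shows "(\<lambda>g. \<xi> g * cnj (\<eta> g)) summable_on UNIV"
proof -
  have "norm (\<xi> g * cnj (\<eta> g)) \<le> (cmod (\<xi> g))^2 + (cmod (\<eta> g))^2" for g
  proof -
    have "norm (\<xi> g * cnj (\<eta> g)) = cmod (\<xi> g) * cmod (\<eta> g)" by (simp add: norm_mult)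
    also have "\<dots> \<le> (cmod (\<xi> g))^2 + (cmod (\<eta> g))^2"
      using sum_squares_bound[of "cmod (\<xi> g)" "cmod (\<eta> g)"]
        mult_nonneg_nonneg[OF norm_ge_zero norm_ge_zero, of "\<xi> g" "\<eta> g"]
      by linarith
    finally show ?thesis .
  qed
  moreover have "(\<lambda>g. (cmod (\<xi> g))^2 + (cmod (\<eta> g))^2) summable_on UNIV"
    using assms by (intro summable_on_add) (auto simp: ell2_def)
  ultimately show ?thesis
    by (auto intro!: abs_summable_summable elim!: Infinite_Sum.abs_summable_on_comparison_test')
qed

lemma l2inner_linear_right:
  assumes "\<zeta> \<in> ell2" "\<xi> \<in> ell2" "\<eta> \<in> ell2"
  shows "l2inner \<zeta> (\<lambda>h. a * \<xi> h + \<eta> h) = cnj a * l2inner \<zeta> \<xi> + l2inner \<zeta> \<eta>"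
proof -
  have "l2inner \<zeta> (\<lambda>h. a * \<xi> h + \<eta> h) =
      infsum (\<lambda>g. cnj a * (\<zeta> g * cnj (\<xi> g)) + \<zeta> g * cnj (\<eta> g)) UNIV"
    unfolding l2inner_def by (simp add: algebra_simps)
  also have "\<dots> = cnj a * l2inner \<zeta> \<xi> + l2inner \<zeta> \<eta>"
    unfolding l2inner_def
    using summable_on_cmult_right[OF l2inner_summable[OF assms(1,2)], of "cnj a"]
      l2inner_summable[OF assms(1,3)]
    by (simp add: infsum_add infsum_cmult_right')
  finally show ?thesis .
qed

lemma l2inner_delta_at_left: "l2inner (delta_at h) \<zeta> = cnj (\<zeta> h)"
proof -
  have "l2inner (delta_at h) \<zeta> = infsum (\<lambda>g. delta_at h g * cnj (\<zeta> g)) {h}"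
    unfolding l2inner_def by (rule infsum_cong_neutral) (auto simp: delta_at_def)
  then show ?thesis by (simp add: delta_at_def)
qed

lemma l2inner_scale_left: "l2inner (\<lambda>h. c * \<xi> h) \<eta> = c * l2inner \<xi> \<eta>"
  unfolding l2inner_def by (simp add: mult.assoc infsum_cmult_right')

section \<open>Bounded operators\<close>

lemma bounded_opI:
  assumes "\<And>\<xi>. \<xi> \<in> ell2 \<Longrightarrow> T \<xi> \<in> ell2" "\<And>\<xi>. \<xi> \<in> ell2 \<Longrightarrow> l2norm (T \<xi>) \<le> M * l2norm \<xi>"
  shows "bounded_op T"
  using assms unfolding bounded_op_def by blast

lemma bounded_opD: "bounded_op T \<Longrightarrow> \<xi> \<in> ell2 \<Longrightarrow> T \<xi> \<in> ell2"
  unfolding bounded_op_def by blast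

lemma l2norm_le_opnorm:
  assumes "bounded_op T" "\<xi> \<in> ell2"
  shows "l2norm (T \<xi>) \<le> opnorm T * l2norm \<xi>"
proof -
  obtain M where M: "\<And>\<eta>. \<eta> \<in> ell2 \<Longrightarrow> l2norm (T \<eta>) \<le> M * l2norm \<eta>"
    using assms(1) by (auto simp: bounded_op_def)
  show ?thesis
  proof (cases "\<xi> = (\<lambda>_. 0)")
    case True
    then show ?thesis using M[OF assms(2)] by (simp add: ell2_zero)
  next
    case False
    have "l2norm (T \<eta>) / l2norm \<eta> \<le> M" if "\<eta> \<in> ell2" "\<eta> \<noteq> (\<lambda>_. 0)" for \<eta>
      using M[OF that(1)] l2norm_pos[OF that] by (simp add: pos_divide_le_eq)
    then have "bdd_above {l2norm (T \<eta>) / l2norm \<eta> | \<eta>. \<eta> \<in> ell2 \<and> \<eta> \<noteq> (\<lambda>_. 0)}"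
      by (auto intro!: bdd_aboveI[where M=M])
    then have "l2norm (T \<xi>) / l2norm \<xi> \<le> opnorm T"
      unfolding opnorm_def using assms(2) False by (intro cSup_upper) auto
    then show ?thesis using l2norm_pos[OF assms(2) False] by (simp add: divide_le_eq)
  qed
qed

lemma opnorm_le:
  assumes "\<And>\<xi>. \<xi> \<in> ell2 \<Longrightarrow> l2norm (T \<xi>) \<le> C * l2norm \<xi>"
  shows "opnorm T \<le> C"
  unfolding opnorm_def
proof (rule cSup_least)
  have "l2norm (T (delta_at k)) / l2norm (delta_at k) \<in>
      {l2norm (T \<xi>) / l2norm \<xi> | \<xi>. \<xi> \<in> ell2 \<and> \<xi> \<noteq> (\<lambda>_. 0)}" for k
    by (intro CollectI exI[of _ "delta_at k"]) (simp add: delta_at_ell2(1) delta_at_nonzero)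
  then show "{l2norm (T \<xi>) / l2norm \<xi> | \<xi>. \<xi> \<in> ell2 \<and> \<xi> \<noteq> (\<lambda>_. 0)} \<noteq> {}"
    by (metis empty_iff)
next
  fix r assume "r \<in> {l2norm (T \<xi>) / l2norm \<xi> | \<xi>. \<xi> \<in> ell2 \<and> \<xi> \<noteq> (\<lambda>_. 0)}"
  then obtain \<xi> where r: "r = l2norm (T \<xi>) / l2norm \<xi>" "\<xi> \<in> ell2" "\<xi> \<noteq> (\<lambda>_. 0)"
    unfolding mem_Collect_eq by (elim exE conjE)
  show "r \<le> C" unfolding r(1) using assms[OF r(2)] l2norm_pos[OF r(2,3)]
    by (simp add: pos_divide_le_eq)
qed

lemma opnorm_nonneg:
  assumes "bounded_op T"
  shows "opnorm T \<ge> 0"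
proof -
  have "0 \<le> l2norm (T (delta_at k))" for k by (rule l2norm_nonneg)
  also have "l2norm (T (delta_at k)) \<le> opnorm T" for k
    using l2norm_le_opnorm[OF assms delta_at_ell2(1)] by (simp add: delta_at_ell2(2))
  finally show ?thesis .
qed

lemma bounded_op_add:
  fixes T S :: "'g op"
  assumes "bounded_op T" "bounded_op S"
  shows "bounded_op (\<lambda>\<xi> h. T \<xi> h + S \<xi> h)"
proof (rule bounded_opI[where M="opnorm T + opnorm S"])
  fix \<xi> :: "'g \<Rightarrow> complex" assume \<xi>: "\<xi> \<in> ell2"
  have T\<xi>: "T \<xi> \<in> ell2" and S\<xi>: "S \<xi> \<in> ell2"
    using bounded_opD[OF assms(1) \<xi>] bounded_opD[OF assms(2) \<xi>] .
  then show "(\<lambda>h. T \<xi> h + S \<xi> h) \<in> ell2" by (rule ell2_add)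
  show "l2norm (\<lambda>h. T \<xi> h + S \<xi> h) \<le> (opnorm T + opnorm S) * l2norm \<xi>"
    using ell2_add(2)[OF T\<xi> S\<xi>] l2norm_le_opnorm[OF assms(1) \<xi>] l2norm_le_opnorm[OF assms(2) \<xi>]
    by (simp add: distrib_right)
qed

lemma bounded_op_scale:
  fixes T :: "'g op"
  assumes "bounded_op T"
  shows "bounded_op (\<lambda>\<xi> h. c * T \<xi> h)"
proof (rule bounded_opI[where M="cmod c * opnorm T"])
  fix \<xi> :: "'g \<Rightarrow> complex" assume \<xi>: "\<xi> \<in> ell2"
  have T\<xi>: "T \<xi> \<in> ell2" by (rule bounded_opD[OF assms \<xi>])
  then show "(\<lambda>h. c * T \<xi> h) \<in> ell2" by (rule ell2_scale)
  show "l2norm (\<lambda>h. c * T \<xi> h) \<le> cmod c * opnorm T * l2norm \<xi>"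
    using ell2_scale(2)[OF T\<xi>] mult_left_mono[OF l2norm_le_opnorm[OF assms \<xi>] norm_ge_zero[of c]]
    by (simp add: mult.assoc)
qed

lemma bounded_op_diff:
  assumes "bounded_op T" "bounded_op S"
  shows "bounded_op (\<lambda>\<xi> h. T \<xi> h - S \<xi> h)"
  using bounded_op_add[OF assms(1) bounded_op_scale[OF assms(2), of "-1"]] by simp

lemma bounded_op_comp:
  fixes T S :: "'g op"
  assumes "bounded_op T" "bounded_op S"
  shows "bounded_op (\<lambda>\<xi>. T (S \<xi>))"
proof (rule bounded_opI[where M="opnorm T * opnorm S"])
  fix \<xi> :: "'g \<Rightarrow> complex" assume \<xi>: "\<xi> \<in> ell2"
  have S\<xi>: "S \<xi> \<in> ell2" by (rule bounded_opD[OF assms(2) \<xi>])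
  then show "T (S \<xi>) \<in> ell2" by (rule bounded_opD[OF assms(1)])
  have "l2norm (T (S \<xi>)) \<le> opnorm T * l2norm (S \<xi>)" by (rule l2norm_le_opnorm[OF assms(1) S\<xi>])
  also have "\<dots> \<le> opnorm T * (opnorm S * l2norm \<xi>)"
    by (rule mult_left_mono[OF l2norm_le_opnorm[OF assms(2) \<xi>] opnorm_nonneg[OF assms(1)]])
  finally show "l2norm (T (S \<xi>)) \<le> opnorm T * opnorm S * l2norm \<xi>" by (simp add: mult.assoc)
qed

lemma bounded_op_tendsto_pointwise:
  assumes "\<And>n. bounded_op (Ts n)" "bounded_op T" "\<xi> \<in> ell2"
    and "(\<lambda>n. opnorm (\<lambda>\<xi> h. Ts n \<xi> h - T \<xi> h)) \<longlonglongrightarrow> 0"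
  shows "(\<lambda>n. Ts n \<xi> h) \<longlonglongrightarrow> T \<xi> h"
proof -
  have bound: "cmod (Ts n \<xi> h - T \<xi> h) \<le> opnorm (\<lambda>\<xi> h. Ts n \<xi> h - T \<xi> h) * l2norm \<xi>" for n
  proof -
    have D: "bounded_op (\<lambda>\<xi> h. Ts n \<xi> h - T \<xi> h)" by (rule bounded_op_diff[OF assms(1,2)])
    have "cmod (Ts n \<xi> h - T \<xi> h) \<le> l2norm (\<lambda>h. Ts n \<xi> h - T \<xi> h)"
      using norm_le_l2norm[OF bounded_opD[OF D assms(3)]] by simp
    also have "\<dots> \<le> opnorm (\<lambda>\<xi> h. Ts n \<xi> h - T \<xi> h) * l2norm \<xi>"
      using l2norm_le_opnorm[OF D assms(3)] by simp
    finally show ?thesis .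
  qed
  have "(\<lambda>n. opnorm (\<lambda>\<xi> h. Ts n \<xi> h - T \<xi> h) * l2norm \<xi>) \<longlonglongrightarrow> 0"
    using tendsto_mult_left_zero[OF assms(4)] by simp
  from Lim_null_comparison[OF always_eventually[OF allI[OF bound]] this]
  show ?thesis by (simp add: LIM_zero_iff)
qed

definition linear_on_ell2 :: "'g op \<Rightarrow> bool" where
  "linear_on_ell2 T \<longleftrightarrow>
     (\<forall>\<xi>\<in>ell2. \<forall>\<eta>\<in>ell2. \<forall>a. T (\<lambda>h. a * \<xi> h + \<eta> h) = (\<lambda>h. a * T \<xi> h + T \<eta> h))"

lemma linear_on_ell2D:
  assumes "linear_on_ell2 T" "\<xi> \<in> ell2" "\<eta> \<in> ell2"
  shows "T (\<lambda>h. a * \<xi> h + \<eta> h) = (\<lambda>h. a * T \<xi> h + T \<eta> h)"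
  using assms(1)[unfolded linear_on_ell2_def, rule_format, OF assms(2,3)] .

lemma linear_on_ell2_zero:
  assumes "linear_on_ell2 T"
  shows "T (\<lambda>_. 0) = (\<lambda>_. 0)"
proof
  fix h
  have "T (\<lambda>_. 0) = (\<lambda>h. T (\<lambda>_. 0) h + T (\<lambda>_. 0) h)"
    using linear_on_ell2D[OF assms ell2_zero(1) ell2_zero(1), of 1] by simp
  from fun_cong[OF this, of h] show "T (\<lambda>_. 0) h = 0" by simp
qed

lemma linear_on_ell2_add:
  "linear_on_ell2 T \<Longrightarrow> \<xi> \<in> ell2 \<Longrightarrow> \<eta> \<in> ell2 \<Longrightarrow> T (\<lambda>h. \<xi> h + \<eta> h) = (\<lambda>h. T \<xi> h + T \<eta> h)"
  using linear_on_ell2D[of T \<xi> \<eta> 1] by simp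

lemma linear_on_ell2_scale:
  "linear_on_ell2 T \<Longrightarrow> \<xi> \<in> ell2 \<Longrightarrow> T (\<lambda>h. a * \<xi> h) = (\<lambda>h. a * T \<xi> h)"
  using linear_on_ell2D[of T \<xi> "\<lambda>_. 0" a] ell2_zero(1) linear_on_ell2_zero[of T] by simp

lemma linear_on_ell2_sum:
  assumes "linear_on_ell2 T" "finite I" "\<And>i. i \<in> I \<Longrightarrow> v i \<in> ell2"
  shows "T (\<lambda>h. \<Sum>i\<in>I. c i * v i h) = (\<lambda>h. \<Sum>i\<in>I. c i * T (v i) h)"
  using assms(2,3)
proof (induction I rule: finite_induct)
  case empty
  then show ?case using linear_on_ell2_zero[OF assms(1)] by simp
next
  case (insert a I)
  have "(\<lambda>h. \<Sum>i\<in>I. c i * v i h) \<in> ell2"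
    using ell2_sum[OF insert(1), of "\<lambda>i h. c i * v i h"] insert(4) ell2_scale(1) by auto
  then show ?case
    using insert linear_on_ell2D[OF assms(1), of "v a" "\<lambda>h. \<Sum>i\<in>I. c i * v i h" "c a"] by simp
qed

lemma opnorm_le_if_finite_support:
  fixes T :: "'g op"
  assumes "bounded_op T" "linear_on_ell2 T" "\<tau> \<ge> 0"
    and finite_support: "\<And>\<zeta> K. finite K \<Longrightarrow> (\<And>h. h \<notin> K \<Longrightarrow> \<zeta> h = 0) \<Longrightarrow> l2norm (T \<zeta>) \<le> \<tau> * l2norm \<zeta>"
  shows "opnorm T \<le> \<tau>"
proof (rule opnorm_le)
  fix \<xi> :: "'g \<Rightarrow> complex" assume \<xi>: "\<xi> \<in> ell2"
  show "l2norm (T \<xi>) \<le> \<tau> * l2norm \<xi>"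
  proof (rule field_le_epsilon)
    fix e :: real assume e: "e > 0"
    define M where "M = opnorm T"
    have M: "M \<ge> 0" unfolding M_def by (rule opnorm_nonneg[OF assms(1)])
    obtain K where K: "finite K" "l2norm (\<lambda>h. if h \<in> K then 0 else \<xi> h) \<le> e / (M + 1)"
      using ell2_tail[OF \<xi> finite.emptyI, of "e / (M + 1)"] e M by auto
    define \<xi>\<^sub>1 where "\<xi>\<^sub>1 = (\<lambda>h. if h \<in> K then \<xi> h else 0)"
    define \<xi>\<^sub>2 where "\<xi>\<^sub>2 = (\<lambda>h. if h \<in> K then 0 else \<xi> h)"
    have \<xi>\<^sub>1: "\<xi>\<^sub>1 \<in> ell2" "l2norm \<xi>\<^sub>1 \<le> 1 * l2norm \<xi>" and \<xi>\<^sub>2: "\<xi>\<^sub>2 \<in> ell2"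
      using ell2_dominated[OF \<xi>, of \<xi>\<^sub>1 1] ell2_dominated[OF \<xi>, of \<xi>\<^sub>2 1]
      by (auto simp: \<xi>\<^sub>1_def \<xi>\<^sub>2_def)
    have "(\<lambda>h. \<xi>\<^sub>1 h + \<xi>\<^sub>2 h) = \<xi>" by (auto simp: \<xi>\<^sub>1_def \<xi>\<^sub>2_def)
    from arg_cong[OF this, of T] have "T \<xi> = (\<lambda>h. T \<xi>\<^sub>1 h + T \<xi>\<^sub>2 h)"
      using linear_on_ell2_add[OF assms(2) \<xi>\<^sub>1(1) \<xi>\<^sub>2] by simp
    then have "l2norm (T \<xi>) \<le> l2norm (T \<xi>\<^sub>1) + l2norm (T \<xi>\<^sub>2)"
      using ell2_add(2)[OF bounded_opD[OF assms(1) \<xi>\<^sub>1(1)] bounded_opD[OF assms(1) \<xi>\<^sub>2]] by simp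
    also have "l2norm (T \<xi>\<^sub>1) \<le> \<tau> * l2norm \<xi>"
      using finite_support[OF K(1), of \<xi>\<^sub>1] mult_left_mono[OF \<xi>\<^sub>1(2) assms(3)]
      by (simp add: \<xi>\<^sub>1_def)
    also have "l2norm (T \<xi>\<^sub>2) \<le> M * (e / (M + 1))"
      using l2norm_le_opnorm[OF assms(1) \<xi>\<^sub>2] mult_left_mono[OF K(2) M]
      unfolding M_def \<xi>\<^sub>2_def by linarith
    also have "M * (e / (M + 1)) \<le> e"
      using e M by (simp add: field_simps)
    finally show "l2norm (T \<xi>) \<le> \<tau> * l2norm \<xi> + e" by simp
  qed
qed

section \<open>Twisted regular representations and the right commutant\<close>

definition unimodular :: "('g \<Rightarrow> 'g \<Rightarrow> complex) \<Rightarrow> bool" where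
  "unimodular \<sigma> \<longleftrightarrow> (\<forall>g h. cmod (\<sigma> g h) = 1)"

lemma normalized_2cocycle_unimodular: "normalized_2cocycle \<sigma> \<Longrightarrow> unimodular \<sigma>"
  by (simp add: normalized_2cocycle_def unimodular_def)

lemma unimodular_one: "unimodular (\<lambda>_ _. 1)"
  by (simp add: unimodular_def)

lemma unimodular_mult_cnj: "unimodular \<sigma> \<Longrightarrow> \<sigma> g h * cnj (\<sigma> g h) = 1"
  using complex_norm_square[of "\<sigma> g h"] by (simp add: unimodular_def)

lemma normalized_2cocycle_cnj:
  assumes "normalized_2cocycle \<sigma>"
  shows "\<sigma> g a * cnj (\<sigma> a k) = cnj (\<sigma> (g + a) k) * \<sigma> g (a + k)"
proof -
  have u: "\<sigma> x y * cnj (\<sigma> x y) = 1" for x y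
    using normalized_2cocycle_unimodular[OF assms] by (rule unimodular_mult_cnj)
  have "\<sigma> g a * cnj (\<sigma> a k) = \<sigma> g a * \<sigma> (g + a) k * cnj (\<sigma> a k) * cnj (\<sigma> (g + a) k)"
    using u[of "g + a" k] by (simp add: mult_ac)
  also have "\<dots> = \<sigma> a k * \<sigma> g (a + k) * cnj (\<sigma> a k) * cnj (\<sigma> (g + a) k)"
    using assms by (simp add: normalized_2cocycle_def)
  also have "\<dots> = cnj (\<sigma> (g + a) k) * \<sigma> g (a + k)"
    using u[of a k] by (simp add: mult_ac)
  finally show ?thesis .
qed

lemma Lam_isometry:
  assumes "unimodular \<sigma>" "\<xi> \<in> ell2"
  shows "Lam \<sigma> g \<xi> \<in> ell2" "l2norm (Lam \<sigma> g \<xi>) = l2norm \<xi>"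
  using ell2_reindex[OF assms(2) bij_plus[of "-g"], of "\<lambda>h. \<sigma> g (-g + h)"] assms(1)
  by (simp_all add: Lam_def unimodular_def)

definition twisted_sum :: "('g::group_add \<Rightarrow> 'g \<Rightarrow> complex) \<Rightarrow> ('g \<Rightarrow> complex) \<Rightarrow> 'g set \<Rightarrow> 'g op" where
  "twisted_sum \<sigma> c E = (\<lambda>\<xi> h. \<Sum>g\<in>E. c g * Lam \<sigma> g \<xi> h)"

lemma twisted_sum_l1_bound:
  assumes "unimodular \<sigma>" "finite E" "\<xi> \<in> ell2"
  shows "twisted_sum \<sigma> c E \<xi> \<in> ell2"
    "l2norm (twisted_sum \<sigma> c E \<xi>) \<le> (\<Sum>g\<in>E. cmod (c g)) * l2norm \<xi>"
proof -
  have summand: "(\<lambda>h. c g * Lam \<sigma> g \<xi> h) \<in> ell2"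
    "l2norm (\<lambda>h. c g * Lam \<sigma> g \<xi> h) = cmod (c g) * l2norm \<xi>" for g
    using ell2_scale[OF Lam_isometry(1)[OF assms(1,3)]] Lam_isometry(2)[OF assms(1,3)] by simp_all
  show "twisted_sum \<sigma> c E \<xi> \<in> ell2"
    "l2norm (twisted_sum \<sigma> c E \<xi>) \<le> (\<Sum>g\<in>E. cmod (c g)) * l2norm \<xi>"
    using ell2_sum[OF assms(2), of "\<lambda>g h. c g * Lam \<sigma> g \<xi> h"] summand
    by (simp_all add: twisted_sum_def sum_distrib_right)
qed

lemma bounded_op_twisted_sum: "unimodular \<sigma> \<Longrightarrow> finite E \<Longrightarrow> bounded_op (twisted_sum \<sigma> c E)"
  by (rule bounded_opI[where M="\<Sum>g\<in>E. cmod (c g)"]) (simp_all add: twisted_sum_l1_bound)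

lemma twisted_sum_in_twisted_Cr:
  assumes "finite F"
  shows "twisted_sum \<sigma> c F \<in> twisted_Cr \<sigma>"
  using assms
proof (induction F rule: finite_induct)
  case empty
  have "(\<lambda>\<xi> h. 0 * Lam \<sigma> 0 \<xi> h) \<in> twisted_Cr \<sigma>"
    by (rule twisted_Cr.scale[OF twisted_Cr.gen])
  then show ?case by (simp add: twisted_sum_def)
next
  case (insert a F)
  have "(\<lambda>\<xi> h. (\<lambda>\<xi> h. c a * Lam \<sigma> a \<xi> h) \<xi> h + twisted_sum \<sigma> c F \<xi> h) \<in> twisted_Cr \<sigma>"
    by (rule twisted_Cr.add[OF twisted_Cr.scale[OF twisted_Cr.gen] insert.IH])
  then show ?case using insert.hyps by (simp add: twisted_sum_def)
qed

lemma twisted_Cr_diff: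
  assumes "T \<in> twisted_Cr \<sigma>" "S \<in> twisted_Cr \<sigma>"
  shows "(\<lambda>\<xi> h. T \<xi> h - S \<xi> h) \<in> twisted_Cr \<sigma>"
  using twisted_Cr.add[OF assms(1) twisted_Cr.scale[OF assms(2), of "-1"]] by simp

text \<open>The right regular representation twisted by the conjugate cocycle, which commutes with
  every \<open>Lam \<sigma> g\<close> by \<open>normalized_2cocycle_cnj\<close>.\<close>

definition Rho :: "('g::group_add \<Rightarrow> 'g \<Rightarrow> complex) \<Rightarrow> 'g \<Rightarrow> 'g op" where
  "Rho \<sigma> k \<xi> = (\<lambda>h. cnj (\<sigma> h k) * \<xi> (h + k))"

lemma Rho_isometry:
  assumes "unimodular \<sigma>" "\<xi> \<in> ell2"
  shows "Rho \<sigma> k \<xi> \<in> ell2" "l2norm (Rho \<sigma> k \<xi>) = l2norm \<xi>"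
  using ell2_reindex[OF assms(2) bij_plus_right[of k], of "\<lambda>h. cnj (\<sigma> h k)"] assms(1)
  by (simp_all add: Rho_def unimodular_def)

lemma l2inner_Rho:
  assumes "unimodular \<sigma>"
  shows "l2inner (Rho \<sigma> k \<xi>) (Rho \<sigma> k \<eta>) = l2inner \<xi> \<eta>"
proof -
  have "l2inner (Rho \<sigma> k \<xi>) (Rho \<sigma> k \<eta>) = infsum (\<lambda>h. \<xi> (h + k) * cnj (\<eta> (h + k))) UNIV"
    unfolding l2inner_def Rho_def
    using unimodular_mult_cnj[OF assms] by (intro infsum_cong) (simp add: mult_ac)
  also have "\<dots> = l2inner \<xi> \<eta>"
    unfolding l2inner_def using bij_plus_right[of k]
    by (intro infsum_reindex_bij_betw[where f="\<lambda>j. \<xi> j * cnj (\<eta> j)"])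
      (simp add: bij_betw_def bij_def)
  finally show ?thesis .
qed

lemma delta_at_eq_Rho:
  assumes "unimodular \<sigma>"
  shows "delta_at h = (\<lambda>h'. \<sigma> h k * Rho \<sigma> k (delta_at (h + k)) h')"
  using unimodular_mult_cnj[OF assms] by (auto simp: fun_eq_iff Rho_def delta_at_def)

definition right_commutant :: "('g::group_add \<Rightarrow> 'g \<Rightarrow> complex) \<Rightarrow> 'g op set" where
  "right_commutant \<sigma> = {T. bounded_op T \<and> linear_on_ell2 T \<and>
     (\<forall>k. \<forall>\<xi>\<in>ell2. T (Rho \<sigma> k \<xi>) = Rho \<sigma> k (T \<xi>))}"

lemma right_commutantI:
  assumes "bounded_op T" "linear_on_ell2 T" "\<And>k \<xi>. \<xi> \<in> ell2 \<Longrightarrow> T (Rho \<sigma> k \<xi>) = Rho \<sigma> k (T \<xi>)"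
  shows "T \<in> right_commutant \<sigma>"
  using assms unfolding right_commutant_def by blast

lemma right_commutantD:
  assumes "T \<in> right_commutant \<sigma>"
  shows "bounded_op T" "linear_on_ell2 T" "\<xi> \<in> ell2 \<Longrightarrow> T (Rho \<sigma> k \<xi>) = Rho \<sigma> k (T \<xi>)"
  using assms unfolding right_commutant_def by auto

lemma Lam_in_right_commutant:
  fixes \<sigma> :: "'g::group_add \<Rightarrow> 'g \<Rightarrow> complex"
  assumes "normalized_2cocycle \<sigma>"
  shows "Lam \<sigma> g \<in> right_commutant \<sigma>"
proof (rule right_commutantI)
  have u: "unimodular \<sigma>" using assms by (rule normalized_2cocycle_unimodular)
  show "bounded_op (Lam \<sigma> g)"
    by (rule bounded_opI[where M=1]) (simp_all add: Lam_isometry[OF u])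
  show "linear_on_ell2 (Lam \<sigma> g)"
    unfolding linear_on_ell2_def Lam_def by (simp add: algebra_simps)
  fix k and \<xi> :: "'g \<Rightarrow> complex"
  show "Lam \<sigma> g (Rho \<sigma> k \<xi>) = Rho \<sigma> k (Lam \<sigma> g \<xi>)"
  proof
    fix h
    define a where "a = -g + h"
    have "g + a = h" "-g + (h + k) = a + k" by (simp_all add: a_def add.assoc)
    then show "Lam \<sigma> g (Rho \<sigma> k \<xi>) h = Rho \<sigma> k (Lam \<sigma> g \<xi>) h"
      using normalized_2cocycle_cnj[OF assms, of g a k]
      by (simp add: Lam_def Rho_def a_def[symmetric] mult.assoc[symmetric])
  qed
qed

lemma right_commutant_add:
  assumes "T \<in> right_commutant \<sigma>" "S \<in> right_commutant \<sigma>"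
  shows "(\<lambda>\<xi> h. T \<xi> h + S \<xi> h) \<in> right_commutant \<sigma>"
proof (rule right_commutantI)
  show "bounded_op (\<lambda>\<xi> h. T \<xi> h + S \<xi> h)"
    using bounded_op_add[OF right_commutantD(1)[OF assms(1)] right_commutantD(1)[OF assms(2)]] .
  show "linear_on_ell2 (\<lambda>\<xi> h. T \<xi> h + S \<xi> h)"
    using right_commutantD(2)[OF assms(1)] right_commutantD(2)[OF assms(2)]
    unfolding linear_on_ell2_def by (simp add: algebra_simps)
  show "(\<lambda>h. T (Rho \<sigma> k \<xi>) h + S (Rho \<sigma> k \<xi>) h) = Rho \<sigma> k (\<lambda>h. T \<xi> h + S \<xi> h)"
    if "\<xi> \<in> ell2" for k \<xi>
    using right_commutantD(3)[OF assms(1) that] right_commutantD(3)[OF assms(2) that]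
    by (simp add: Rho_def algebra_simps)
qed

lemma right_commutant_scale:
  assumes "T \<in> right_commutant \<sigma>"
  shows "(\<lambda>\<xi> h. c * T \<xi> h) \<in> right_commutant \<sigma>"
proof (rule right_commutantI)
  show "bounded_op (\<lambda>\<xi> h. c * T \<xi> h)"
    using bounded_op_scale[OF right_commutantD(1)[OF assms]] .
  show "linear_on_ell2 (\<lambda>\<xi> h. c * T \<xi> h)"
    using right_commutantD(2)[OF assms] unfolding linear_on_ell2_def by (simp add: algebra_simps)
  show "(\<lambda>h. c * T (Rho \<sigma> k \<xi>) h) = Rho \<sigma> k (\<lambda>h. c * T \<xi> h)" if "\<xi> \<in> ell2" for k \<xi>
    using right_commutantD(3)[OF assms that] by (simp add: Rho_def algebra_simps)
qed

lemma right_commutant_comp: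
  assumes "T \<in> right_commutant \<sigma>" "S \<in> right_commutant \<sigma>"
  shows "(\<lambda>\<xi>. T (S \<xi>)) \<in> right_commutant \<sigma>"
proof (rule right_commutantI)
  note T = right_commutantD[OF assms(1)] and S = right_commutantD[OF assms(2)]
  show "bounded_op (\<lambda>\<xi>. T (S \<xi>))" using bounded_op_comp[OF T(1) S(1)] .
  show "linear_on_ell2 (\<lambda>\<xi>. T (S \<xi>))"
    unfolding linear_on_ell2_def
    using linear_on_ell2D[OF S(2)] linear_on_ell2D[OF T(2) bounded_opD[OF S(1)]
      bounded_opD[OF S(1)]]
    by simp
  show "T (S (Rho \<sigma> k \<xi>)) = Rho \<sigma> k (T (S \<xi>))" if "\<xi> \<in> ell2" for k \<xi>
    using S(3)[OF that] T(3)[OF bounded_opD[OF S(1) that]] by simp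
qed

lemma right_commutant_delta_at:
  assumes "T \<in> right_commutant \<sigma>" "unimodular \<sigma>"
  shows "T (delta_at h) = (\<lambda>h'. \<sigma> h k * Rho \<sigma> k (T (delta_at (h + k))) h')"
proof -
  have "T (delta_at h) = T (\<lambda>h'. \<sigma> h k * Rho \<sigma> k (delta_at (h + k)) h')"
    using delta_at_eq_Rho[OF assms(2)] by metis
  also have "\<dots> = (\<lambda>h'. \<sigma> h k * T (Rho \<sigma> k (delta_at (h + k))) h')"
    by (rule linear_on_ell2_scale[OF right_commutantD(2)[OF assms(1)]
      Rho_isometry(1)[OF assms(2) delta_at_ell2(1)]])
  also have "T (Rho \<sigma> k (delta_at (h + k))) = Rho \<sigma> k (T (delta_at (h + k)))"
    by (rule right_commutantD(3)[OF assms(1) delta_at_ell2(1)])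
  finally show ?thesis .
qed

lemma right_commutant_adjoint:
  fixes \<sigma> :: "'g::group_add \<Rightarrow> 'g \<Rightarrow> complex"
  assumes "T \<in> right_commutant \<sigma>" "unimodular \<sigma>" "bounded_op S"
    and adj: "\<forall>\<xi>\<in>ell2. \<forall>\<eta>\<in>ell2. l2inner (T \<xi>) \<eta> = l2inner \<xi> (S \<eta>)"
  shows "S \<in> right_commutant \<sigma>"
proof (rule right_commutantI[OF assms(3)])
  have S_apply: "S \<eta> h = cnj (l2inner (T (delta_at h)) \<eta>)" if "\<eta> \<in> ell2" for \<eta> h
    using adj delta_at_ell2(1)[of h] that by (simp add: l2inner_delta_at_left)
  have Tdelta: "T (delta_at h) \<in> ell2" for h
    by (rule bounded_opD[OF right_commutantD(1)[OF assms(1)] delta_at_ell2(1)])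
  show "linear_on_ell2 S"
    unfolding linear_on_ell2_def
  proof (intro ballI allI ext)
    fix \<xi> \<eta> :: "'g \<Rightarrow> complex" and a h assume "\<xi> \<in> ell2" "\<eta> \<in> ell2"
    then show "S (\<lambda>h. a * \<xi> h + \<eta> h) h = a * S \<xi> h + S \<eta> h"
      using S_apply[OF ell2_add(1)[OF ell2_scale(1)]] S_apply
      by (simp add: l2inner_linear_right[OF Tdelta])
  qed
  show "S (Rho \<sigma> k \<eta>) = Rho \<sigma> k (S \<eta>)" if "\<eta> \<in> ell2" for k \<eta>
  proof
    fix h
    have "l2inner (T (delta_at h)) (Rho \<sigma> k \<eta>) = \<sigma> h k * l2inner (T (delta_at (h + k))) \<eta>"
      unfolding right_commutant_delta_at[OF assms(1,2), of h k]
      by (simp add: l2inner_scale_left l2inner_Rho[OF assms(2)])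
    then show "S (Rho \<sigma> k \<eta>) h = Rho \<sigma> k (S \<eta>) h"
      using S_apply[OF Rho_isometry(1)[OF assms(2) that]] S_apply[OF that] by (simp add: Rho_def)
  qed
qed

lemma right_commutant_limit:
  fixes \<sigma> :: "'g::group_add \<Rightarrow> 'g \<Rightarrow> complex"
  assumes "\<And>n. Ts n \<in> right_commutant \<sigma>" "unimodular \<sigma>" "bounded_op T"
    and lim: "(\<lambda>n. opnorm (\<lambda>\<xi> h. Ts n \<xi> h - T \<xi> h)) \<longlonglongrightarrow> 0"
  shows "T \<in> right_commutant \<sigma>"
proof (rule right_commutantI[OF assms(3)])
  have pointwise: "(\<lambda>n. Ts n \<xi> h) \<longlonglongrightarrow> T \<xi> h" if "\<xi> \<in> ell2" for \<xi> h
    using bounded_op_tendsto_pointwise[OF right_commutantD(1)[OF assms(1)] assms(3) that lim] .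
  show "linear_on_ell2 T"
    unfolding linear_on_ell2_def
  proof (intro ballI allI ext)
    fix \<xi> \<eta> :: "'g \<Rightarrow> complex" and a h assume \<xi>\<eta>: "\<xi> \<in> ell2" "\<eta> \<in> ell2"
    have "(\<lambda>n. Ts n (\<lambda>h. a * \<xi> h + \<eta> h) h) \<longlonglongrightarrow> a * T \<xi> h + T \<eta> h"
      unfolding linear_on_ell2D[OF right_commutantD(2)[OF assms(1)] \<xi>\<eta>]
      by (intro tendsto_intros pointwise \<xi>\<eta>)
    then show "T (\<lambda>h. a * \<xi> h + \<eta> h) h = a * T \<xi> h + T \<eta> h"
      by (rule LIMSEQ_unique[OF pointwise[OF ell2_add(1)[OF ell2_scale(1)[OF \<xi>\<eta>(1)] \<xi>\<eta>(2)]]])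
  qed
  show "T (Rho \<sigma> k \<xi>) = Rho \<sigma> k (T \<xi>)" if "\<xi> \<in> ell2" for k \<xi>
  proof
    fix h
    have "Ts n (Rho \<sigma> k \<xi>) h = cnj (\<sigma> h k) * Ts n \<xi> (h + k)" for n
      using fun_cong[OF right_commutantD(3)[OF assms(1)[of n] that, of k], of h]
      by (simp add: Rho_def)
    then have "(\<lambda>n. Ts n (Rho \<sigma> k \<xi>) h) \<longlonglongrightarrow> cnj (\<sigma> h k) * T \<xi> (h + k)"
      by (simp only:) (intro tendsto_intros pointwise that)
    then show "T (Rho \<sigma> k \<xi>) h = Rho \<sigma> k (T \<xi>) h"
      unfolding Rho_def[of \<sigma> k "T \<xi>"]
      by (rule LIMSEQ_unique[OF pointwise[OF Rho_isometry(1)[OF assms(2) that]]])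
  qed
qed

lemma twisted_Cr_subset_right_commutant:
  assumes "normalized_2cocycle \<sigma>"
  shows "twisted_Cr \<sigma> \<subseteq> right_commutant \<sigma>"
proof
  have u: "unimodular \<sigma>" using assms by (rule normalized_2cocycle_unimodular)
  fix T assume "T \<in> twisted_Cr \<sigma>"
  then show "T \<in> right_commutant \<sigma>"
  proof induction
    case (gen g)
    show ?case by (rule Lam_in_right_commutant[OF assms])
  next
    case (add T S)
    show ?case by (rule right_commutant_add[OF add.IH])
  next
    case (scale T c)
    show ?case by (rule right_commutant_scale[OF scale.IH])
  next
    case (comp T S)
    show ?case by (rule right_commutant_comp[OF comp.IH])
  next
    case (adj T S)
    show ?case by (rule right_commutant_adjoint[OF adj.IH u adj.hyps(2,3)])
  next
    case (lim Ts T)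
    show ?case by (rule right_commutant_limit[OF lim.IH u lim.hyps(2,3)])
  qed
qed

lemma right_commutant_l2norm_delta_at:
  assumes "T \<in> right_commutant \<sigma>" "unimodular \<sigma>"
  shows "l2norm (T (delta_at k)) = l2norm (T delta_e)"
proof -
  have "T (delta_at k) = (\<lambda>h. \<sigma> k (-k) * Rho \<sigma> (-k) (T delta_e) h)"
    using right_commutant_delta_at[OF assms, of k "-k"] by (simp add: delta_e_eq_delta_at)
  moreover have "T delta_e \<in> ell2"
    unfolding delta_e_eq_delta_at
    by (rule bounded_opD[OF right_commutantD(1)[OF assms(1)] delta_at_ell2(1)])
  ultimately show ?thesis
    using ell2_scale(2)[OF Rho_isometry(1)[OF assms(2)]] Rho_isometry(2)[OF assms(2)] assms(2)
    by (simp add: unimodular_def)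
qed

lemma right_commutant_finite_support_bound:
  assumes "T \<in> right_commutant \<sigma>" "unimodular \<sigma>" "finite K" "\<And>h. h \<notin> K \<Longrightarrow> \<zeta> h = 0"
  shows "l2norm (T \<zeta>) \<le> (\<Sum>k\<in>K. cmod (\<zeta> k)) * l2norm (T delta_e)"
proof -
  note T = right_commutantD[OF assms(1)]
  have "(\<lambda>h. \<Sum>k\<in>K. \<zeta> k * delta_at k h) = \<zeta>"
  proof
    fix h
    have "(\<Sum>k\<in>K. \<zeta> k * delta_at k h) = (\<Sum>k\<in>K. if k = h then \<zeta> k else 0)"
      by (intro sum.cong) (auto simp: delta_at_def)
    then show "(\<Sum>k\<in>K. \<zeta> k * delta_at k h) = \<zeta> h" using assms(3,4) by auto
  qed
  from arg_cong[OF this, of T]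
  have "T \<zeta> = (\<lambda>h. \<Sum>k\<in>K. \<zeta> k * T (delta_at k) h)"
    using linear_on_ell2_sum[OF T(2) assms(3) delta_at_ell2(1)] by simp
  moreover have Tk: "T (delta_at k) \<in> ell2" for k
    by (rule bounded_opD[OF T(1) delta_at_ell2(1)])
  ultimately have "l2norm (T \<zeta>) \<le> (\<Sum>k\<in>K. l2norm (\<lambda>h. \<zeta> k * T (delta_at k) h))"
    using ell2_sum[OF assms(3), of "\<lambda>k h. \<zeta> k * T (delta_at k) h"] ell2_scale(1)[OF Tk] by simp
  also have "\<dots> = (\<Sum>k\<in>K. cmod (\<zeta> k)) * l2norm (T delta_e)"
    using ell2_scale(2)[OF Tk] right_commutant_l2norm_delta_at[OF assms(1,2)]
    by (simp add: sum_distrib_right)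
  finally show ?thesis .
qed

section \<open>Haagerup content\<close>

lemma opnorm_twisted_sum_le:
  "unimodular \<sigma> \<Longrightarrow> finite E \<Longrightarrow> opnorm (twisted_sum \<sigma> c E) \<le> (\<Sum>g\<in>E. cmod (c g))"
  by (rule opnorm_le) (rule twisted_sum_l1_bound(2))

lemma pi_lambda_eq_twisted_sum:
  assumes "finite E" "{g. f g \<noteq> 0} \<subseteq> E"
  shows "pi_lambda f = twisted_sum (\<lambda>_ _. 1) f E"
proof (intro ext)
  fix \<xi> h
  show "pi_lambda f \<xi> h = twisted_sum (\<lambda>_ _. 1) f E \<xi> h"
    unfolding pi_lambda_def twisted_sum_def lreg_def
    by (rule sum.mono_neutral_left[OF assms]) simp
qed

lemma opnorm_pi_lambda_le_haagerup_content:
  assumes "finite E" "{g. f g \<noteq> 0} \<subseteq> E" "l2norm f = 1"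
  shows "opnorm (pi_lambda f) \<le> haagerup_content E"
proof -
  have "E \<noteq> {}"
  proof
    assume "E = {}"
    then have "f = (\<lambda>_. 0)" using assms(2) by auto
    then show False using assms(3) by (simp add: ell2_zero)
  qed
  have "opnorm (pi_lambda f') \<le> real (card E)"
    if f': "{g. f' g \<noteq> 0} \<subseteq> E" "l2norm f' = 1" for f'
  proof -
    have "f' \<in> ell2"
      by (rule ell2_finite_support(1)[OF assms(1)]) (use f'(1) in auto)
    then have "cmod (f' g) \<le> 1" for g
      using norm_le_l2norm f'(2) by metis
    then have "(\<Sum>g\<in>E. cmod (f' g)) \<le> real (card E)"
      using sum_mono[of E "\<lambda>g. cmod (f' g)" "\<lambda>_. 1"] by simp
    then show ?thesis
      unfolding pi_lambda_eq_twisted_sum[OF assms(1) f'(1)]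
      using opnorm_twisted_sum_le[OF unimodular_one assms(1)] by (rule order_trans[rotated])
  qed
  then have "bdd_above
      {opnorm (pi_lambda f) | f. finite {g. f g \<noteq> 0} \<and> {g. f g \<noteq> 0} \<subseteq> E \<and> l2norm f = 1}"
    by (intro bdd_aboveI[where M="real (card E)"]) auto
  moreover have "opnorm (pi_lambda f) \<in>
      {opnorm (pi_lambda f) | f. finite {g. f g \<noteq> 0} \<and> {g. f g \<noteq> 0} \<subseteq> E \<and> l2norm f = 1}"
    using assms finite_subset[OF assms(2,1)] by blast
  ultimately show ?thesis
    unfolding haagerup_content_def using \<open>E \<noteq> {}\<close> by (simp add: cSup_upper)
qed

lemma haagerup_content_nonneg:
  assumes "finite E"
  shows "haagerup_content E \<ge> 0"
proof (cases "E = {}")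
  case True
  then show ?thesis by (simp add: haagerup_content_def)
next
  case False
  then obtain k where k: "k \<in> E" by blast
  have supp: "{g. delta_at k g \<noteq> 0} = {k}" by (auto simp: delta_at_def)
  have "0 \<le> opnorm (pi_lambda (delta_at k))"
    unfolding pi_lambda_eq_twisted_sum[of "{k}" "delta_at k", OF _ equalityD1[OF supp], simplified]
    by (rule opnorm_nonneg[OF bounded_op_twisted_sum[OF unimodular_one]]) simp
  also have "\<dots> \<le> haagerup_content E"
    using k supp delta_at_ell2(2) by (intro opnorm_pi_lambda_le_haagerup_content[OF assms]) auto
  finally show ?thesis .
qed

lemma l2norm_pi_lambda_le:
  assumes "finite B" "{g. f g \<noteq> 0} \<subseteq> B" "\<xi> \<in> ell2"
  shows "l2norm (pi_lambda f \<xi>) \<le> haagerup_content B * l2norm f * l2norm \<xi>"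
proof (cases "f = (\<lambda>_. 0)")
  case True
  then show ?thesis by (simp add: pi_lambda_def ell2_zero)
next
  case False
  have f: "f \<in> ell2" using ell2_finite_support(1)[OF assms(1)] assms(2) by blast
  define N where "N = l2norm f"
  have N: "N > 0" unfolding N_def using l2norm_pos[OF f False] .
  define f' where "f' = (\<lambda>g. complex_of_real (1 / N) * f g)"
  have supp': "{g. f' g \<noteq> 0} \<subseteq> B" using assms(2) by (auto simp: f'_def)
  have "l2norm f' = 1"
    using ell2_scale(2)[OF f, of "complex_of_real (1 / N)"] N
    by (simp add: f'_def N_def[symmetric] norm_divide)
  then have op: "opnorm (pi_lambda f') \<le> haagerup_content B"
    by (rule opnorm_pi_lambda_le_haagerup_content[OF assms(1) supp'])
  have "pi_lambda f \<xi> = (\<lambda>h. N * pi_lambda f' \<xi> h)"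
    unfolding pi_lambda_eq_twisted_sum[OF assms(1,2)] pi_lambda_eq_twisted_sum[OF assms(1) supp']
    using N by (simp add: twisted_sum_def f'_def sum_distrib_left mult.assoc[symmetric])
  moreover have "bounded_op (pi_lambda f')"
    unfolding pi_lambda_eq_twisted_sum[OF assms(1) supp']
    by (rule bounded_op_twisted_sum[OF unimodular_one assms(1)])
  ultimately have "l2norm (pi_lambda f \<xi>) \<le> N * (opnorm (pi_lambda f') * l2norm \<xi>)"
    using ell2_scale(2)[OF bounded_opD, of _ \<xi> N] l2norm_le_opnorm[of _ \<xi>] N assms(3)
    by (simp add: mult_left_mono)
  also have "\<dots> \<le> N * (haagerup_content B * l2norm \<xi>)"
    using op N l2norm_nonneg[of \<xi>] by (simp add: mult_right_mono)
  finally show ?thesis by (simp add: N_def mult_ac)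
qed

text \<open>Taking moduli of coefficients and vector dominates a twisted sum pointwise by an
  untwisted one, to which the Haagerup content applies.\<close>

lemma l2norm_twisted_sum_le_haagerup_content:
  assumes "unimodular \<sigma>" "E \<subseteq> B" "finite B" "\<xi> \<in> ell2"
  shows "l2norm (twisted_sum \<sigma> c E \<xi>) \<le> haagerup_content B * L2_set (\<lambda>g. cmod (c g)) E * l2norm \<xi>"
proof -
  have E: "finite E" using assms(2,3) by (rule finite_subset)
  define f where "f g = (if g \<in> E then complex_of_real (cmod (c g)) else 0)" for g
  define \<xi>' where "\<xi>' h = complex_of_real (cmod (\<xi> h))" for h
  have supp: "{g. f g \<noteq> 0} \<subseteq> B" using assms(2) by (auto simp: f_def)
  have \<xi>': "\<xi>' \<in> ell2" "l2norm \<xi>' = l2norm \<xi>"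
    using assms(4) by (simp_all add: \<xi>'_def ell2_def l2norm_def)
  have norm_f: "l2norm f = L2_set (\<lambda>g. cmod (c g)) E"
    using ell2_finite_support(2)[OF E, of f] by (simp add: f_def cong: L2_set_cong)
  have pi_f: "pi_lambda f = twisted_sum (\<lambda>_ _. 1) f B"
    by (rule pi_lambda_eq_twisted_sum[OF assms(3) supp])
  have sum_real: "pi_lambda f \<xi>' h = complex_of_real (\<Sum>g\<in>E. cmod (c g) * cmod (\<xi> (-g + h)))" for h
    unfolding pi_f using sum.mono_neutral_left[OF assms(3,2), of "\<lambda>g. f g * \<xi>' (-g + h)"]
    by (simp add: twisted_sum_def Lam_def f_def \<xi>'_def)
  have "cmod (pi_lambda f \<xi>' h) = (\<Sum>g\<in>E. cmod (c g) * cmod (\<xi> (-g + h)))" for h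
    unfolding sum_real norm_of_real by (intro abs_of_nonneg sum_nonneg) simp
  then have dominated: "cmod (twisted_sum \<sigma> c E \<xi> h) \<le> 1 * cmod (pi_lambda f \<xi>' h)" for h
    using norm_sum[of "\<lambda>g. c g * Lam \<sigma> g \<xi> h" E] assms(1)
    by (simp add: twisted_sum_def Lam_def norm_mult unimodular_def)
  have "bounded_op (pi_lambda f)"
    unfolding pi_f by (rule bounded_op_twisted_sum[OF unimodular_one assms(3)])
  from ell2_dominated(2)[OF bounded_opD[OF this \<xi>'(1)] dominated]
  have "l2norm (twisted_sum \<sigma> c E \<xi>) \<le> 1 * l2norm (pi_lambda f \<xi>')" by simp
  also have "\<dots> \<le> haagerup_content B * L2_set (\<lambda>g. cmod (c g)) E * l2norm \<xi>"
    using l2norm_pi_lambda_le[OF assms(3) supp \<xi>'(1)] \<xi>'(2) norm_f by simp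
  finally show ?thesis by simp
qed

lemma L2_set_le_weighted_infsum:
  assumes "finite A" "p > 0" "\<And>g. g \<in> A \<Longrightarrow> p \<le> w g" "\<And>g. w g \<ge> 0"
    and "(\<lambda>g. (cmod (c g))^2 * w g) summable_on UNIV"
  shows "L2_set (\<lambda>g. cmod (c g)) A \<le> sqrt (infsum (\<lambda>g. (cmod (c g))^2 * w g) UNIV) / sqrt p"
proof -
  have "(\<Sum>g\<in>A. (cmod (c g))^2) \<le> (\<Sum>g\<in>A. (cmod (c g))^2 * w g) / p"
    unfolding sum_divide_distrib using assms(2,3)
    by (intro sum_mono) (simp add: pos_le_divide_eq mult_left_mono)
  also have "\<dots> \<le> infsum (\<lambda>g. (cmod (c g))^2 * w g) UNIV / p"
    using assms by (intro divide_right_mono finite_sum_le_infsum) auto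
  finally show ?thesis
    unfolding L2_set_def real_sqrt_divide[symmetric] by (rule real_sqrt_le_mono)
qed

lemma sum_le_suminf_shift:
  fixes a :: "nat \<Rightarrow> real"
  assumes "summable a" "\<And>n. a n \<ge> 0" "finite S" "\<And>n. n \<in> S \<Longrightarrow> N \<le> n"
  shows "sum a S \<le> (\<Sum>i. a (i + N))"
proof -
  have "inj_on (\<lambda>n. n - N) S" using assms(4) by (intro inj_onI) (metis le_add_diff_inverse2)
  then have "sum a S = (\<Sum>i\<in>(\<lambda>n. n - N) ` S. a (i + N))"
    using assms(4) by (simp add: sum.reindex)
  also have "\<dots> \<le> (\<Sum>i. a (i + N))"
    using summable_ignore_initial_segment[OF assms(1)] assms(2,3) by (intro sum_le_suminf) auto
  finally show ?thesis .
qed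

definition haagerup_ratio :: "('g::group_add \<Rightarrow> real) \<Rightarrow> (real \<Rightarrow> real) \<Rightarrow> nat \<Rightarrow> real" where
  "haagerup_ratio L \<Psi> n = haagerup_content (ball_L L (real n + 1)) / sqrt (\<Psi> (real n))"

lemma haagerup_ratio_nonneg:
  "proper_length L \<Longrightarrow> (\<And>r. r \<ge> 0 \<Longrightarrow> \<Psi> r > 0) \<Longrightarrow> haagerup_ratio L \<Psi> n \<ge> 0"
  unfolding haagerup_ratio_def
  by (intro divide_nonneg_nonneg haagerup_content_nonneg real_sqrt_ge_zero less_imp_le)
    (simp_all add: ball_L_def proper_length_def)

lemma weighted_infsum_nonneg:
  "proper_length L \<Longrightarrow> (\<And>r. r \<ge> 0 \<Longrightarrow> \<Psi> r > 0) \<Longrightarrow> infsum (\<lambda>g. (cmod (c g))^2 * \<Psi> (L g)) UNIV \<ge> 0"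
  by (intro infsum_nonneg) (simp add: proper_length_def less_imp_le)

lemma l2norm_twisted_sum_annulus_le:
  assumes "unimodular \<sigma>" "proper_length L"
    and \<Psi>: "mono_on {0..} \<Psi>" "\<And>r. r \<ge> 0 \<Longrightarrow> \<Psi> r > 0"
    and W: "(\<lambda>g. (cmod (c g))^2 * \<Psi> (L g)) summable_on UNIV"
    and E: "finite E" "\<And>g. g \<in> E \<Longrightarrow> real n < L g \<and> L g \<le> real n + 1" and \<zeta>: "\<zeta> \<in> ell2"
  shows "l2norm (twisted_sum \<sigma> c E \<zeta>) \<le>
    sqrt (infsum (\<lambda>g. (cmod (c g))^2 * \<Psi> (L g)) UNIV) * haagerup_ratio L \<Psi> n * l2norm \<zeta>"
proof -
  have ball: "finite (ball_L L (real n + 1))"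
    using assms(2) by (simp add: ball_L_def proper_length_def)
  have "E \<subseteq> ball_L L (real n + 1)" using E(2) by (auto simp: ball_L_def)
  then have "l2norm (twisted_sum \<sigma> c E \<zeta>) \<le>
      haagerup_content (ball_L L (real n + 1)) * L2_set (\<lambda>g. cmod (c g)) E * l2norm \<zeta>"
    by (rule l2norm_twisted_sum_le_haagerup_content[OF assms(1) _ ball \<zeta>])
  moreover have "L2_set (\<lambda>g. cmod (c g)) E \<le>
      sqrt (infsum (\<lambda>g. (cmod (c g))^2 * \<Psi> (L g)) UNIV) / sqrt (\<Psi> (real n))"
    using E assms(2) \<Psi>
    by (intro L2_set_le_weighted_infsum W mono_onD[OF \<Psi>(1)])
      (auto simp: proper_length_def less_imp_le)
  ultimately have "l2norm (twisted_sum \<sigma> c E \<zeta>) \<le> haagerup_content (ball_L L (real n + 1)) *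
      (sqrt (infsum (\<lambda>g. (cmod (c g))^2 * \<Psi> (L g)) UNIV) / sqrt (\<Psi> (real n))) * l2norm \<zeta>"
    using haagerup_content_nonneg[OF ball] l2norm_nonneg[of \<zeta>]
    by (meson mult_left_mono mult_right_mono order_trans)
  then show ?thesis by (simp add: haagerup_ratio_def mult_ac)
qed

lemma l2norm_twisted_sum_beyond_le:
  assumes "unimodular \<sigma>" "proper_length L"
    and \<Psi>: "mono_on {0..} \<Psi>" "\<And>r. r \<ge> 0 \<Longrightarrow> \<Psi> r > 0"
    and W: "(\<lambda>g. (cmod (c g))^2 * \<Psi> (L g)) summable_on UNIV"
    and A: "summable (haagerup_ratio L \<Psi>)"
    and D: "finite D" "\<And>g. g \<in> D \<Longrightarrow> real N < L g" and \<zeta>: "\<zeta> \<in> ell2"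
  shows "l2norm (twisted_sum \<sigma> c D \<zeta>) \<le>
    sqrt (infsum (\<lambda>g. (cmod (c g))^2 * \<Psi> (L g)) UNIV) * (\<Sum>i. haagerup_ratio L \<Psi> (i + N)) * l2norm \<zeta>"
proof -
  define W where "W = infsum (\<lambda>g. (cmod (c g))^2 * \<Psi> (L g)) UNIV"
  define \<phi> where "\<phi> g = nat (\<lceil>L g\<rceil> - 1)" for g
  have \<phi>: "N \<le> \<phi> g" "real (\<phi> g) < L g" "L g \<le> real (\<phi> g) + 1" if "g \<in> D" for g
    using D(2)[OF that] ceiling_correct[of "L g"] unfolding \<phi>_def by linarith+
  define A where "A n = {g \<in> D. \<phi> g = n}" for n
  have "twisted_sum \<sigma> c D \<zeta> = (\<lambda>h. \<Sum>n\<in>\<phi> ` D. twisted_sum \<sigma> c (A n) \<zeta> h)"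
    unfolding twisted_sum_def A_def using D(1) by (simp add: sum.group)
  then have "l2norm (twisted_sum \<sigma> c D \<zeta>) \<le> (\<Sum>n\<in>\<phi> ` D. l2norm (twisted_sum \<sigma> c (A n) \<zeta>))"
    using ell2_sum[of "\<phi> ` D" "\<lambda>n. twisted_sum \<sigma> c (A n) \<zeta>"] D(1)
      twisted_sum_l1_bound(1)[OF assms(1) _ \<zeta>] by (simp add: A_def)
  also have "\<dots> \<le> (\<Sum>n\<in>\<phi> ` D. sqrt W * haagerup_ratio L \<Psi> n * l2norm \<zeta>)"
    unfolding W_def using D(1) \<phi>
    by (intro sum_mono l2norm_twisted_sum_annulus_le[OF assms(1,2) \<Psi> W _ _ \<zeta>]) (auto simp: A_def)
  also have "\<dots> = sqrt W * (\<Sum>n\<in>\<phi> ` D. haagerup_ratio L \<Psi> n) * l2norm \<zeta>"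
    by (simp add: sum_distrib_left sum_distrib_right)
  also have "\<dots> \<le> sqrt W * (\<Sum>i. haagerup_ratio L \<Psi> (i + N)) * l2norm \<zeta>"
    using sum_le_suminf_shift[OF A haagerup_ratio_nonneg[OF assms(2) \<Psi>(2)], of "\<phi> ` D" N] D(1) \<phi>(1)
      weighted_infsum_nonneg[OF assms(2) \<Psi>(2)] l2norm_nonneg[of \<zeta>]
    unfolding W_def by (auto intro!: mult_right_mono mult_left_mono)
  finally show ?thesis by (simp add: W_def)
qed

section \<open>Convergence of Fourier series\<close>

lemma fourier_partial_eq_twisted_sum: "fourier_partial \<sigma> x F = twisted_sum \<sigma> (fourier_coeff x) F"
  by (simp add: fourier_partial_def twisted_sum_def)

lemma twisted_sum_delta_e:
  fixes \<sigma> :: "'g::group_add \<Rightarrow> 'g \<Rightarrow> complex"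
  assumes "normalized_2cocycle \<sigma>" "finite F"
  shows "twisted_sum \<sigma> c F delta_e = (\<lambda>h. if h \<in> F then c h else 0)"
proof
  fix h :: 'g
  have "(-g + h = 0) = (g = h)" for g
    by (metis add_minus_cancel add.right_neutral left_minus)
  moreover have "\<sigma> g 0 = 1" for g
    using assms(1) by (simp add: normalized_2cocycle_def)
  ultimately have "Lam \<sigma> g delta_e h = (if g = h then 1 else 0)" for g
    by (simp add: Lam_def delta_e_def)
  then have "twisted_sum \<sigma> c F delta_e h = (\<Sum>g\<in>F. if g = h then c g else 0)"
    unfolding twisted_sum_def by (intro sum.cong) auto
  then show "twisted_sum \<sigma> c F delta_e h = (if h \<in> F then c h else 0)"
    using assms(2) by simp
qed

lemma fourier_remainder_in_right_commutant:
  assumes "normalized_2cocycle \<sigma>" "x \<in> twisted_Cr \<sigma>" "finite F"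
  shows "(\<lambda>\<xi> h. fourier_partial \<sigma> x F \<xi> h - x \<xi> h) \<in> right_commutant \<sigma>"
  unfolding fourier_partial_eq_twisted_sum
  by (rule subsetD[OF twisted_Cr_subset_right_commutant[OF assms(1)]
        twisted_Cr_diff[OF twisted_sum_in_twisted_Cr[OF assms(3)] assms(2)]])

lemma fourier_coeff_ell2:
  assumes "normalized_2cocycle \<sigma>" "x \<in> twisted_Cr \<sigma>"
  shows "fourier_coeff x \<in> ell2"
  unfolding fourier_coeff_def delta_e_eq_delta_at
  using subsetD[OF twisted_Cr_subset_right_commutant[OF assms(1)] assms(2)]
  by (rule bounded_opD[OF right_commutantD(1) delta_at_ell2(1)])

lemma l2norm_fourier_remainder_delta_e:
  assumes "normalized_2cocycle \<sigma>" "finite F"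
  shows "l2norm ((\<lambda>\<xi> h. fourier_partial \<sigma> x F \<xi> h - x \<xi> h) delta_e) =
    l2norm (\<lambda>h. if h \<in> F then 0 else fourier_coeff x h)"
  unfolding fourier_partial_eq_twisted_sum twisted_sum_delta_e[OF assms]
    l2norm_def fourier_coeff_def
  by (intro arg_cong[where f=sqrt] infsum_cong) simp

text \<open>For finite \<open>F' \<supseteq> F\<close> the remainder over \<open>F\<close> is the remainder over \<open>F'\<close> minus the
  block over \<open>F' - F\<close>. On a finitely supported vector the remainder over \<open>F'\<close> is bounded by
  the tail of the coefficients outside \<open>F'\<close>, which is small for large \<open>F'\<close>.\<close>

lemma l2norm_fourier_remainder_finite_support_le:
  fixes \<sigma> :: "'g::group_add \<Rightarrow> 'g \<Rightarrow> complex"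
  assumes \<sigma>: "normalized_2cocycle \<sigma>" and x: "x \<in> twisted_Cr \<sigma>" and F: "finite F"
    and block: "\<And>F' \<zeta>. finite F' \<Longrightarrow> F \<subseteq> F' \<Longrightarrow> \<zeta> \<in> ell2 \<Longrightarrow>
      l2norm (fourier_partial \<sigma> x (F' - F) \<zeta>) \<le> \<tau> * l2norm \<zeta>"
    and K: "finite K" "\<And>h. h \<notin> K \<Longrightarrow> \<zeta> h = 0"
  shows "l2norm (\<lambda>h. fourier_partial \<sigma> x F \<zeta> h - x \<zeta> h) \<le> \<tau> * l2norm \<zeta>"
proof (rule field_le_epsilon)
  fix e :: real assume e: "e > 0"
  have u: "unimodular \<sigma>" using \<sigma> by (rule normalized_2cocycle_unimodular)
  have \<zeta>: "\<zeta> \<in> ell2" using K by (rule ell2_finite_support(1))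
  define Y where "Y F' = (\<lambda>\<xi> h. fourier_partial \<sigma> x F' \<xi> h - x \<xi> h)" for F'
  have Y: "Y F' \<in> right_commutant \<sigma>" if "finite F'" for F'
    unfolding Y_def by (rule fourier_remainder_in_right_commutant[OF \<sigma> x that])
  define C where "C = (\<Sum>k\<in>K. cmod (\<zeta> k))"
  have C: "C \<ge> 0" unfolding C_def by (simp add: sum_nonneg)
  obtain F' where F': "finite F'" "F \<subseteq> F'"
    "l2norm (\<lambda>h. if h \<in> F' then 0 else fourier_coeff x h) \<le> e / (C + 1)"
    using ell2_tail[OF fourier_coeff_ell2[OF \<sigma> x] F, of "e / (C + 1)"] e C by auto
  have "Y F \<zeta> = (\<lambda>h. Y F' \<zeta> h - fourier_partial \<sigma> x (F' - F) \<zeta> h)"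
    unfolding Y_def fourier_partial_def by (simp add: fun_eq_iff sum.subset_diff[OF F'(2,1)])
  then have "l2norm (Y F \<zeta>) \<le> l2norm (Y F' \<zeta>) + l2norm (fourier_partial \<sigma> x (F' - F) \<zeta>)"
    using ell2_diff(2)[OF bounded_opD[OF right_commutantD(1)[OF Y[OF F'(1)]] \<zeta>]
        twisted_sum_l1_bound(1)[OF u _ \<zeta>]] F'(1) by (simp add: fourier_partial_eq_twisted_sum)
  moreover have "l2norm (Y F' \<zeta>) \<le> C * l2norm (Y F' delta_e)"
    unfolding C_def
    by (rule right_commutant_finite_support_bound[OF Y[OF F'(1)] u K(1)]) (rule K(2))
  moreover have "C * l2norm (Y F' delta_e) \<le> C * (e / (C + 1))"
    using l2norm_fourier_remainder_delta_e[OF \<sigma> F'(1)] mult_left_mono[OF F'(3) C]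
    unfolding Y_def by simp
  moreover have "C * (e / (C + 1)) \<le> e" using e C by (simp add: field_simps)
  ultimately show "l2norm (\<lambda>h. fourier_partial \<sigma> x F \<zeta> h - x \<zeta> h) \<le> \<tau> * l2norm \<zeta> + e"
    using block[OF F'(1,2) \<zeta>] unfolding Y_def by simp
qed

lemma opnorm_fourier_remainder_le:
  assumes \<sigma>: "normalized_2cocycle \<sigma>" and x: "x \<in> twisted_Cr \<sigma>" and F: "finite F"
    and block: "\<And>F' \<zeta>. finite F' \<Longrightarrow> F \<subseteq> F' \<Longrightarrow> \<zeta> \<in> ell2 \<Longrightarrow>
      l2norm (fourier_partial \<sigma> x (F' - F) \<zeta>) \<le> \<tau> * l2norm \<zeta>"
  shows "opnorm (\<lambda>\<xi> h. fourier_partial \<sigma> x F \<xi> h - x \<xi> h) \<le> \<tau>"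
proof (rule opnorm_le_if_finite_support)
  show "bounded_op (\<lambda>\<xi> h. fourier_partial \<sigma> x F \<xi> h - x \<xi> h)"
    "linear_on_ell2 (\<lambda>\<xi> h. fourier_partial \<sigma> x F \<xi> h - x \<xi> h)"
    using right_commutantD[OF fourier_remainder_in_right_commutant[OF \<sigma> x F]] by blast+
  show "0 \<le> \<tau>"
    using block[OF F order_refl delta_at_ell2(1)]
    by (simp add: fourier_partial_def delta_at_ell2 ell2_zero)
  show "l2norm (\<lambda>h. fourier_partial \<sigma> x F \<zeta> h - x \<zeta> h) \<le> \<tau> * l2norm \<zeta>"
    if "finite K" "\<And>h. h \<notin> K \<Longrightarrow> \<zeta> h = 0" for \<zeta> K
    by (rule l2norm_fourier_remainder_finite_support_le[OF \<sigma> x F block that])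
qed

lemma opnorm_fourier_remainder_le_tail:
  fixes \<sigma> :: "'g::group_add \<Rightarrow> 'g \<Rightarrow> complex"
  assumes \<sigma>: "normalized_2cocycle \<sigma>" and x: "x \<in> twisted_Cr \<sigma>" and L: "proper_length L"
    and \<Psi>: "mono_on {0..} \<Psi>" "\<And>r. r \<ge> 0 \<Longrightarrow> \<Psi> r > 0"
    and W: "(\<lambda>g. (cmod (fourier_coeff x g))^2 * \<Psi> (L g)) summable_on UNIV"
    and A: "summable (haagerup_ratio L \<Psi>)"
    and F: "finite F" "ball_L L (real N) \<subseteq> F"
  shows "opnorm (\<lambda>\<xi> h. fourier_partial \<sigma> x F \<xi> h - x \<xi> h) \<le>
    sqrt (infsum (\<lambda>g. (cmod (fourier_coeff x g))^2 * \<Psi> (L g)) UNIV) *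
    (\<Sum>i. haagerup_ratio L \<Psi> (i + N))"
proof (rule opnorm_fourier_remainder_le[OF \<sigma> x F(1)])
  fix F' :: "'g set" and \<zeta> :: "'g \<Rightarrow> complex"
  assume F': "finite F'" "F \<subseteq> F'" and \<zeta>: "\<zeta> \<in> ell2"
  have "real N < L g" if "g \<in> F' - F" for g
  proof -
    have "g \<notin> ball_L L (real N)" using F(2) that by blast
    then show ?thesis by (simp add: ball_L_def)
  qed
  then show "l2norm (fourier_partial \<sigma> x (F' - F) \<zeta>) \<le>
      sqrt (infsum (\<lambda>g. (cmod (fourier_coeff x g))^2 * \<Psi> (L g)) UNIV) *
      (\<Sum>i. haagerup_ratio L \<Psi> (i + N)) * l2norm \<zeta>"
    unfolding fourier_partial_eq_twisted_sum using F'(1)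
    by (intro l2norm_twisted_sum_beyond_le[OF normalized_2cocycle_unimodular[OF \<sigma>]
      L \<Psi> W A _ _ \<zeta>]) auto
qed

lemma fourier_series_converges_weighted:
  assumes \<sigma>: "normalized_2cocycle \<sigma>" and x: "x \<in> twisted_Cr \<sigma>" and L: "proper_length L"
    and \<Psi>: "mono_on {0..} \<Psi>" "\<And>r. r \<ge> 0 \<Longrightarrow> \<Psi> r > 0"
    and W: "(\<lambda>g. (cmod (fourier_coeff x g))^2 * \<Psi> (L g)) summable_on UNIV"
    and A: "summable (haagerup_ratio L \<Psi>)"
  shows "fourier_series_converges \<sigma> x"
  unfolding fourier_series_converges_def
proof (rule tendstoI)
  fix e :: real assume e: "e > 0"
  define W where "W = infsum (\<lambda>g. (cmod (fourier_coeff x g))^2 * \<Psi> (L g)) UNIV"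
  have W0: "W \<ge> 0" unfolding W_def by (rule weighted_infsum_nonneg[OF L \<Psi>(2)])
  have "e / (sqrt W + 1) > 0" using e W0 by (simp add: add_nonneg_pos)
  from suminf_exist_split[OF this A]
  obtain N where N: "norm (\<Sum>i. haagerup_ratio L \<Psi> (i + N)) < e / (sqrt W + 1)" by blast
  have "sqrt W * (\<Sum>i. haagerup_ratio L \<Psi> (i + N)) \<le> sqrt W * (e / (sqrt W + 1))"
    using N W0 by (intro mult_left_mono) auto
  also have "\<dots> < e"
    using e W0 by (simp add: pos_divide_less_eq add_nonneg_pos)
  finally have tail: "sqrt W * (\<Sum>i. haagerup_ratio L \<Psi> (i + N)) < e" .
  have "finite (ball_L L (real N))" using L by (simp add: ball_L_def proper_length_def)
  moreover have "opnorm (\<lambda>\<xi> h. fourier_partial \<sigma> x F \<xi> h - x \<xi> h) < e"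
    if "finite F" "ball_L L (real N) \<subseteq> F" for F
    using opnorm_fourier_remainder_le_tail[OF \<sigma> x L \<Psi> W A that] tail unfolding W_def by linarith
  moreover have "opnorm (\<lambda>\<xi> h. fourier_partial \<sigma> x F \<xi> h - x \<xi> h) \<ge> 0" if "finite F" for F
    using opnorm_nonneg right_commutantD(1)[OF fourier_remainder_in_right_commutant[OF \<sigma> x that]] .
  ultimately show "\<forall>\<^sub>F F in finite_subsets_at_top UNIV.
      dist (opnorm (\<lambda>\<xi> h. fourier_partial \<sigma> x F \<xi> h - x \<xi> h)) 0 < e"
    unfolding eventually_finite_subsets_at_top by (auto simp: dist_real_def)
qed

lemma poly_H_growth_summable:
  assumes "proper_length L" "poly_H_growth L"
  obtains s :: real where "s > 0" "summable (haagerup_ratio L (\<lambda>r. (1 + r) powr s))"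
proof -
  obtain K p where K: "K > 0" and p: "p > 0"
    and growth: "\<And>r. r \<ge> 0 \<Longrightarrow> haagerup_content (ball_L L r) \<le> K * (1 + r) powr p"
    using assms(2) unfolding poly_H_growth_def by blast
  have "summable (haagerup_ratio L (\<lambda>r. (1 + r) powr (2 * p + 4)))"
  proof (rule summable_comparison_test'[where N=0])
    show "summable (\<lambda>n. K * 2 powr p * real (Suc n) powr (-2))"
      using summable_ignore_initial_segment[of "\<lambda>n. real n powr (-2)" 1]
        summable_real_powr_iff[of "-2"]
      by (intro summable_mult) simp
    fix n :: nat
    define y where "y = 1 + real n"
    have y: "y \<ge> 1" by (simp add: y_def)
    have "haagerup_content (ball_L L (real n + 1)) \<le> K * (1 + y) powr p"
      using growth[of "real n + 1"] by (simp add: y_def add.commute)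
    also have "\<dots> \<le> K * (2 * y) powr p" using y p K by (intro mult_left_mono powr_mono2) auto
    finally have "haagerup_content (ball_L L (real n + 1)) / y powr (p + 2) \<le>
        K * (2 * y) powr p / y powr (p + 2)"
      using y by (intro divide_right_mono) auto
    also have "\<dots> = K * 2 powr p * y powr (-2)"
      using y by (simp add: powr_mult powr_add powr_minus_divide powr_numeral)
    moreover have "sqrt ((1 + real n) powr (2 * p + 4)) = y powr (p + 2)"
      unfolding y_def
      by (rule real_sqrt_unique) (simp_all add: power2_eq_square powr_add[symmetric])
    moreover have "haagerup_ratio L (\<lambda>r. (1 + r) powr (2 * p + 4)) n \<ge> 0"
      using assms(1) by (rule haagerup_ratio_nonneg) simp
    ultimately show "norm (haagerup_ratio L (\<lambda>r. (1 + r) powr (2 * p + 4)) n)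
        \<le> K * 2 powr p * real (Suc n) powr (-2)"
      by (simp add: haagerup_ratio_def y_def add_ac)
  qed
  then show ?thesis using that p by (meson add_pos_pos mult_pos_pos zero_less_numeral)
qed

lemma subexp_H_growth_summable:
  assumes "proper_length L" "subexp_H_growth L" "t > 0"
  shows "summable (haagerup_ratio L (\<lambda>r. exp (t * r)))"
proof (rule summable_comparison_test_ev)
  obtain r0 where r0: "\<And>r. r \<ge> r0 \<Longrightarrow> haagerup_content (ball_L L r) < exp (t / 4) powr r"
    using assms(2,3) unfolding subexp_H_growth_def
    by (meson one_less_exp_iff zero_less_divide_iff zero_less_numeral)
  show "summable (\<lambda>n. exp (t / 4) * exp (- t / 4) ^ n)"
    using assms(3) by (intro summable_mult summable_geometric) simp
  show "\<forall>\<^sub>F n in sequentially. norm (haagerup_ratio L (\<lambda>r. exp (t * r)) n) \<le>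
      exp (t / 4) * exp (- t / 4) ^ n"
    using eventually_ge_at_top[of "nat \<lceil>r0\<rceil>"]
  proof eventually_elim
    case (elim n)
    have "haagerup_content (ball_L L (real n + 1)) \<le> exp (t / 4 * (real n + 1))"
      using r0[of "real n + 1"] elim by (simp add: powr_def mult_ac)
    then have "haagerup_content (ball_L L (real n + 1)) / exp (t * real n / 2)
        \<le> exp (t / 4 * (real n + 1)) / exp (t * real n / 2)"
      by (rule divide_right_mono) simp
    also have "\<dots> = exp (t / 4) * exp (- t / 4) ^ n"
      by (simp add: exp_diff[symmetric] exp_add[symmetric] exp_of_nat_mult[symmetric] algebra_simps)
    moreover have "sqrt (exp (t * real n)) = exp (t * real n / 2)"
      by (simp add: real_sqrt_eq_iff exp_double[symmetric] real_sqrt_unique)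
    moreover have "haagerup_ratio L (\<lambda>r. exp (t * r)) n \<ge> 0"
      using assms(1) by (rule haagerup_ratio_nonneg) simp
    ultimately show ?case by (simp add: haagerup_ratio_def)
  qed
qed

theorem theorem3p15:
  fixes L :: "'g::{group_add, countable} \<Rightarrow> real"
  assumes "proper_length L"
  shows "(poly_H_growth L \<longrightarrow>
           (\<exists>s>0. \<forall>\<sigma>. normalized_2cocycle \<sigma> \<longrightarrow>
              (\<forall>x\<in>twisted_Cr \<sigma>.
                 (\<lambda>g. (cmod (fourier_coeff x g))^2 * (1 + L g) powr s) summable_on UNIV
                 \<longrightarrow> fourier_series_converges \<sigma> x)))
       \<and> (subexp_H_growth L \<longrightarrow>
           (\<forall>\<sigma>. normalized_2cocycle \<sigma> \<longrightarrow>
              (\<forall>x\<in>twisted_Cr \<sigma>.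
                 (\<exists>t>0. (\<lambda>g. (cmod (fourier_coeff x g))^2 * exp (t * L g)) summable_on UNIV)
                 \<longrightarrow> fourier_series_converges \<sigma> x)))"
proof (intro conjI impI)
  assume "poly_H_growth L"
  then obtain s :: real where s: "s > 0" and A: "summable (haagerup_ratio L (\<lambda>r. (1 + r) powr s))"
    using poly_H_growth_summable[OF assms] by blast
  have "mono_on {0..} (\<lambda>r. (1 + r) powr s)"
    using s by (intro mono_onI powr_mono2) auto
  then show "\<exists>s>0. \<forall>\<sigma>. normalized_2cocycle \<sigma> \<longrightarrow> (\<forall>x\<in>twisted_Cr \<sigma>.
      (\<lambda>g. (cmod (fourier_coeff x g))^2 * (1 + L g) powr s) summable_on UNIV
      \<longrightarrow> fourier_series_converges \<sigma> x)"
    using s A fourier_series_converges_weighted[OF _ _ assms, where \<Psi>="\<lambda>r. (1 + r) powr s"] by auto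
next
  assume "subexp_H_growth L"
  moreover have "mono_on {0..} (\<lambda>r. exp (t * r))" if "t > 0" for t :: real
    using that by (intro mono_onI) simp
  ultimately show "\<forall>\<sigma>. normalized_2cocycle \<sigma> \<longrightarrow> (\<forall>x\<in>twisted_Cr \<sigma>.
      (\<exists>t>0. (\<lambda>g. (cmod (fourier_coeff x g))^2 * exp (t * L g)) summable_on UNIV)
      \<longrightarrow> fourier_series_converges \<sigma> x)"
    using fourier_series_converges_weighted[OF _ _ assms, where \<Psi>="\<lambda>r. exp (t * r)" for t]
      subexp_H_growth_summable[OF assms] by fastforce
qed

end
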